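(* With $D$, $\star$, $D_1=D[X]$ and $[\star]$ as defined in the context, $\mathrm{QMax}^{[\star]}(D_1)=\{Q_1\in\mathrm{Spec}(D_1)\mid Q_1\cap D=(0)\text{ and }\mathrm{c}_D(Q_1)^{\star_f}=D^\star\}\cup\{P[X]\mid P\in\mathrm{QMax}^{\star_f}(D)\}$.
   Context: $D$ is an integral domain with quotient field $K$, $X,Y$ indeterminates, $\star$ a semistar operation on $D$, $D_1:=D[X]$, $K_1:=K(X)$. $\overline{\boldsymbol F}(A)$ is the set of nonzero $A$-submodules of the quotient field of $A$. A semistar operation on $A$ is a map $\star:\overline{\boldsymbol F}(A)\to\overline{\boldsymbol F}(A)$ with $(xE)^\star=xE^\star$ for nonzero $x$ in the quotient field, $E\subseteq F\Rightarrow E^\star\subseteq F^\star$, $E\subseteq E^\star$, $(E^\star)^\star=E^\star$. $E^{\star_f}=\bigcup\{F^\star\mid F\subseteq E,\ F$ nonzero finitely generated fractional ideal$\}$. A nonzero ideal $I$ of $A$ is a quasi-$\star$-ideal if $I^\star\cap A=I$; $\mathrm{QMax}^\star(A)$ is the set of maximal elements among proper quasi-$\star$-ideals. $\mathrm{c}_D(Q_1)$ is the ideal of $D$ generated by all coefficients of all polynomials in $Q_1$. $\boldsymbol\Delta_1^\star:=\{Q_1\in\mathrm{Spec}(D_1)\mid Q_1\cap D=(0),\ \text{or } Q_1=(Q_1\cap D)[X]\text{ and }(Q_1\cap D)^{\star_f}\subsetneq D^\star\}$; $\mathcal S_1^\star:=D_1[Y]\setminus\bigcup\{Q_1[Y]\mid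 Q_1\in\boldsymbol\Delta_1^\star\}$; $[\star]$ is the semistar operation on $D_1$ given by $E^{[\star]}:=E[Y]_{\mathcal S_1^\star}\cap K_1$, where $E[Y]_{\mathcal S_1^\star}$ is the $D_1[Y]_{\mathcal S_1^\star}$-submodule of $K(X,Y)$ generated by $E$. *)

theory Defs
  imports "HOL-Computational_Algebra.Polynomial" "HOL-Computational_Algebra.Fraction_Field"
begin

text \<open>All rings are represented as subrings R of an ambient field 'f, which plays
the role of the quotient field of R.\<close>

definition emb :: "'a::idom \<Rightarrow> 'a fract" where
  "emb a = Fract a 1"

definition subring_of :: "'f::field set \<Rightarrow> bool" where
  "subring_of R \<longleftrightarrow> 0 \<in> R \<and> 1 \<in> R \<and> (\<forall>x\<in>R. \<forall>y\<in>R. x + y \<in> R \<and> x * y \<in> R \<and> - x \<in> R)"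

definition is_quotient_field_of :: "'f::field set \<Rightarrow> bool" where
  "is_quotient_field_of R \<longleftrightarrow> (\<forall>x. \<exists>a\<in>R. \<exists>b\<in>R. b \<noteq> 0 \<and> x = a / b)"

definition submod :: "'f::field set \<Rightarrow> 'f set \<Rightarrow> bool" where
  "submod R E \<longleftrightarrow> 0 \<in> E \<and> E \<noteq> {0} \<and> (\<forall>x\<in>E. \<forall>y\<in>E. x + y \<in> E) \<and> (\<forall>r\<in>R. \<forall>x\<in>E. r * x \<in> E)"

definition gen :: "'f::field set \<Rightarrow> 'f set \<Rightarrow> 'f set" where
  "gen R S = {(\<Sum>s\<in>T. c s * s) | T c. finite T \<and> T \<subseteq> S \<and> (\<forall>s\<in>T. c s \<in> R)}"

definition semistar :: "'f::field set \<Rightarrow> ('f set \<Rightarrow> 'f set) \<Rightarrow> bool" where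
  "semistar R st \<longleftrightarrow>
     (\<forall>E. submod R E \<longrightarrow> submod R (st E)) \<and>
     (\<forall>E x. submod R E \<longrightarrow> x \<noteq> 0 \<longrightarrow> st ((\<lambda>e. x * e) ` E) = (\<lambda>e. x * e) ` st E) \<and>
     (\<forall>E F. submod R E \<longrightarrow> submod R F \<longrightarrow> E \<subseteq> F \<longrightarrow> st E \<subseteq> st F) \<and>
     (\<forall>E. submod R E \<longrightarrow> E \<subseteq> st E) \<and>
     (\<forall>E. submod R E \<longrightarrow> st (st E) = st E)"

definition fg_frac :: "'f::field set \<Rightarrow> 'f set \<Rightarrow> bool" where
  "fg_frac R F \<longleftrightarrow> (\<exists>S. finite S \<and> F = gen R S) \<and> F \<noteq> {0}"

definition star_f :: "'f::field set \<Rightarrow> ('f set \<Rightarrow> 'f set) \<Rightarrow> 'f set \<Rightarrow> 'f set" where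
  "star_f R st E = \<Union>{st F | F. fg_frac R F \<and> F \<subseteq> E}"

definition is_ideal :: "'f::field set \<Rightarrow> 'f set \<Rightarrow> bool" where
  "is_ideal R I \<longleftrightarrow> I \<subseteq> R \<and> 0 \<in> I \<and> (\<forall>x\<in>I. \<forall>y\<in>I. x + y \<in> I) \<and> (\<forall>r\<in>R. \<forall>x\<in>I. r * x \<in> I)"

definition Spec :: "'f::field set \<Rightarrow> 'f set set" where
  "Spec R = {P. is_ideal R P \<and> P \<noteq> R \<and> (\<forall>a\<in>R. \<forall>b\<in>R. a * b \<in> P \<longrightarrow> a \<in> P \<or> b \<in> P)}"

definition quasi_ideal :: "'f::field set \<Rightarrow> ('f set \<Rightarrow> 'f set) \<Rightarrow> 'f set \<Rightarrow> bool" where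
  "quasi_ideal R st I \<longleftrightarrow> is_ideal R I \<and> I \<noteq> {0} \<and> st I \<inter> R = I"

definition QMax :: "'f::field set \<Rightarrow> ('f set \<Rightarrow> 'f set) \<Rightarrow> 'f set set" where
  "QMax R st = {I. quasi_ideal R st I \<and> I \<noteq> R \<and>
      (\<forall>J. quasi_ideal R st J \<and> J \<noteq> R \<and> I \<subseteq> J \<longrightarrow> J = I)}"

text \<open>D_1 = D[X] inside K_1 = K(X) (= 'k poly fract).\<close>
definition polys_over :: "'a::zero set \<Rightarrow> 'a poly set" where
  "polys_over A = {p. \<forall>i. coeff p i \<in> A}"

definition D1 :: "'k::field set \<Rightarrow> 'k poly fract set" where
  "D1 D = emb ` polys_over D"

definition embK :: "'k::field \<Rightarrow> 'k poly fract" where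
  "embK d = emb [:d:]"

definition contr :: "'k::field set \<Rightarrow> 'k poly fract set \<Rightarrow> 'k set" where
  "contr D Q = {d \<in> D. embK d \<in> Q}"

definition extX :: "'k::field set \<Rightarrow> 'k poly fract set" where
  "extX I = emb ` polys_over I"

definition content_ideal :: "'k::field set \<Rightarrow> 'k poly fract set \<Rightarrow> 'k set" where
  "content_ideal D Q = gen D {coeff p i | p i. emb p \<in> Q}"

definition Delta1 :: "'k::field set \<Rightarrow> ('k set \<Rightarrow> 'k set) \<Rightarrow> 'k poly fract set set" where
  "Delta1 D st = {Q \<in> Spec (D1 D). contr D Q = {0} \<or>
      (Q = extX (contr D Q) \<and> star_f D st (contr D Q) \<subset> st D)}"

text \<open>S_1 inside D_1[Y] (= polynomials over K(X) with coefficients in D_1)\<close>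
definition S1 :: "'k::field set \<Rightarrow> ('k set \<Rightarrow> 'k set) \<Rightarrow> 'k poly fract poly set" where
  "S1 D st = polys_over (D1 D) - \<Union>{polys_over Q | Q. Q \<in> Delta1 D st}"

text \<open>D_1[Y]_{S_1} inside K(X,Y) = ('k poly fract) poly fract\<close>
definition D1Y_loc :: "'k::field set \<Rightarrow> ('k set \<Rightarrow> 'k set) \<Rightarrow> 'k poly fract poly fract set" where
  "D1Y_loc D st = {emb f / emb s | f s. f \<in> polys_over (D1 D) \<and> s \<in> S1 D st}"

text \<open>E^{[star]} = E[Y]_{S_1} \<inter> K_1\<close>
definition bracket_star :: "'k::field set \<Rightarrow> ('k set \<Rightarrow> 'k set) \<Rightarrow> 'k poly fract set \<Rightarrow> 'k poly fract set" where
  "bracket_star D st E = {a. emb [:a:] \<in> gen (D1Y_loc D st) ((\<lambda>e. emb [:e:]) ` E)}"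

end

theory Submission
  imports Defs
begin

(* The proof rests on three facts.
   (1) Every nonzero prime Q_1 of Delta_1 is a quasi-[star]-ideal: an element of
       Q_1[Y]_{S_1} \<inter> D_1, multiplied by a product of denominators from S_1 (which stays
       outside the prime Q_1[Y]), lies in Q_1[Y]; primality then puts it in Q_1.  Both
       kinds of ideals in the theorem lie in Delta_1.
   (2) A proper quasi-[star]-ideal J contains the coefficients of no element of S_1;
       but if J \<inter> D \<noteq> 0 and c_D(J)^{star_f} = D^star, a polynomial in Y whose coefficients
       are a nonzero constant of J and finitely many elements of J with "unit content"
       lies in S_1.  So no proper quasi-[star]-ideal has both properties.
   (3) An ideal strictly containing a nonzero upper to zero Q_1 meets D \<setminus> 0: Q_1 is cut out
       by divisibility by a prime q of K[X], and a combination a q + b j that is a unit of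
       K[X], with denominators cleared, gives a nonzero constant. *)

lemma emb_mult: "emb (a * b) = emb a * emb b" by (simp add: emb_def)
lemma emb_add: "emb (a + b) = emb a + emb b" by (simp add: emb_def)
lemma emb_diff: "emb (a - b) = emb a - emb b" by (simp add: emb_def)
lemma emb_uminus: "emb (- a) = - emb a" by (simp add: emb_def)
lemma emb_0 [simp]: "emb 0 = 0" by (simp add: emb_def Zero_fract_def)
lemma emb_1 [simp]: "emb 1 = 1" by (simp add: emb_def One_fract_def)
lemma emb_inj [simp]: "emb a = emb b \<longleftrightarrow> a = b" by (simp add: emb_def eq_fract)
lemma emb_eq_0 [simp]: "emb a = 0 \<longleftrightarrow> a = 0" using emb_inj[of a 0] by simp
lemma emb_sum: "emb (sum f A) = (\<Sum>x\<in>A. emb (f x))"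
  by (induction A rule: infinite_finite_induct) (auto simp: emb_add)

lemma subring_0: "subring_of R \<Longrightarrow> 0 \<in> R"
  unfolding subring_of_def by auto
lemma subring_1: "subring_of R \<Longrightarrow> 1 \<in> R"
  unfolding subring_of_def by auto
lemma subring_add: "subring_of R \<Longrightarrow> \<forall>x\<in>R. \<forall>y\<in>R. x + y \<in> R"
  unfolding subring_of_def by auto
lemma subring_mult: "subring_of R \<Longrightarrow> x \<in> R \<Longrightarrow> y \<in> R \<Longrightarrow> x * y \<in> R"
  unfolding subring_of_def by auto
lemma subring_uminus: "subring_of R \<Longrightarrow> x \<in> R \<Longrightarrow> - x \<in> R"
  unfolding subring_of_def by auto

lemma sum_closed:
  assumes "0 \<in> M" "\<forall>x\<in>M. \<forall>y\<in>M. x + y \<in> M"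
  shows "(\<forall>x\<in>A. f x \<in> M) \<Longrightarrow> sum f A \<in> M"
  using assms by (induction A rule: infinite_finite_induct) auto

lemma ideal_sub: "is_ideal R I \<Longrightarrow> I \<subseteq> R" unfolding is_ideal_def by auto
lemma ideal_0: "is_ideal R I \<Longrightarrow> 0 \<in> I" unfolding is_ideal_def by auto
lemma ideal_add: "is_ideal R I \<Longrightarrow> x \<in> I \<Longrightarrow> y \<in> I \<Longrightarrow> x + y \<in> I" unfolding is_ideal_def by auto
lemma ideal_mult: "is_ideal R I \<Longrightarrow> r \<in> R \<Longrightarrow> x \<in> I \<Longrightarrow> r * x \<in> I" unfolding is_ideal_def by auto
lemma ideal_mult2: "is_ideal R I \<Longrightarrow> r \<in> R \<Longrightarrow> x \<in> I \<Longrightarrow> x * r \<in> I"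
  using ideal_mult by (metis mult.commute)
lemma ideal_uminus: "subring_of R \<Longrightarrow> is_ideal R I \<Longrightarrow> x \<in> I \<Longrightarrow> - x \<in> I"
  using ideal_mult[of R I "-1" x] subring_uminus[OF _ subring_1] by auto
lemma ideal_diff: "subring_of R \<Longrightarrow> is_ideal R I \<Longrightarrow> x \<in> I \<Longrightarrow> y \<in> I \<Longrightarrow> x - y \<in> I"
  by (metis diff_conv_add_uminus ideal_add ideal_uminus)
lemma ideal_sum: "is_ideal R I \<Longrightarrow> (\<forall>x\<in>A. f x \<in> I) \<Longrightarrow> sum f A \<in> I"
  by (rule sum_closed) (auto simp: ideal_0 ideal_add)
lemma ideal_one: "is_ideal R I \<Longrightarrow> 1 \<in> I \<Longrightarrow> I = R"
  using ideal_mult[of R I _ 1] ideal_sub by fastforce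

lemma Spec_ideal: "Q \<in> Spec R \<Longrightarrow> is_ideal R Q"
  unfolding Spec_def by auto
lemma Spec_prime: "Q \<in> Spec R \<Longrightarrow> a \<in> R \<Longrightarrow> b \<in> R \<Longrightarrow> a * b \<in> Q \<Longrightarrow> a \<in> Q \<or> b \<in> Q"
  unfolding Spec_def by auto
lemma Spec_ne: "Q \<in> Spec R \<Longrightarrow> Q \<noteq> R"
  unfolding Spec_def by auto
lemma Spec_one: "Q \<in> Spec R \<Longrightarrow> 1 \<notin> Q"
  using Spec_ideal Spec_ne ideal_one by blast

lemma genI: "finite T \<Longrightarrow> T \<subseteq> S \<Longrightarrow> (\<forall>s\<in>T. c s \<in> R) \<Longrightarrow> (\<Sum>s\<in>T. c s * s) \<in> gen R S"
  unfolding gen_def by blast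

lemma genE:
  assumes "x \<in> gen R S"
  obtains T c where "finite T" "T \<subseteq> S" "\<forall>s\<in>T. c s \<in> R" "x = (\<Sum>s\<in>T. c s * s)"
  using assms unfolding gen_def by blast

lemma gen_0: "0 \<in> gen R S"
  using genI[of "{}" S] by simp

lemma gen_single: "s \<in> S \<Longrightarrow> r \<in> R \<Longrightarrow> r * s \<in> gen R S"
  using genI[of "{s}" S "\<lambda>_. r" R] by simp

lemma gen_base: "s \<in> S \<Longrightarrow> 1 \<in> R \<Longrightarrow> s \<in> gen R S"
  using gen_single[of s S 1 R] by simp

lemma gen_mono: "S \<subseteq> S' \<Longrightarrow> gen R S \<subseteq> gen R S'"
  unfolding gen_def by blast

text \<open>Two linear combinations can be written over the common support \<open>T1 \<union> T2\<close>.\<close>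

lemma gen_add:
  assumes R0: "0 \<in> R" and Radd: "\<forall>x\<in>R. \<forall>y\<in>R. x + y \<in> R"
    and x: "x \<in> gen R S" and y: "y \<in> gen R S"
  shows "x + y \<in> gen R S"
proof -
  obtain T1 c1 where T1: "finite T1" "T1 \<subseteq> S" "\<forall>s\<in>T1. c1 s \<in> R" "x = (\<Sum>s\<in>T1. c1 s * s)"
    using x by (rule genE)
  obtain T2 c2 where T2: "finite T2" "T2 \<subseteq> S" "\<forall>s\<in>T2. c2 s \<in> R" "y = (\<Sum>s\<in>T2. c2 s * s)"
    using y by (rule genE)
  define c where "c s = (if s \<in> T1 then c1 s else 0) + (if s \<in> T2 then c2 s else 0)" for s
  have fin: "finite (T1 \<union> T2)" using T1 T2 by simp
  have "(\<Sum>s\<in>T1 \<union> T2. c s * s) = (\<Sum>s\<in>T1 \<union> T2. (if s \<in> T1 then c1 s * s else 0))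
          + (\<Sum>s\<in>T1 \<union> T2. (if s \<in> T2 then c2 s * s else 0))"
    unfolding c_def sum.distrib[symmetric] by (intro sum.cong) (auto simp: distrib_right)
  also have "\<dots> = (\<Sum>s\<in>(T1 \<union> T2) \<inter> T1. c1 s * s) + (\<Sum>s\<in>(T1 \<union> T2) \<inter> T2. c2 s * s)"
    by (simp only: sum.inter_restrict[OF fin])
  also have "\<dots> = x + y" unfolding T1(4) T2(4) by (simp add: Int_absorb1 Int_absorb2)
  finally have "(\<Sum>s\<in>T1 \<union> T2. c s * s) = x + y" .
  moreover have "\<forall>s\<in>T1 \<union> T2. c s \<in> R"
    using T1(3) T2(3) R0 Radd unfolding c_def by auto
  ultimately show ?thesis using genI[OF fin, of S c R] T1(2) T2(2) by auto
qed

lemma gen_sum: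
  assumes R0: "0 \<in> R" and Radd: "\<forall>x\<in>R. \<forall>y\<in>R. x + y \<in> R"
  shows "finite T \<Longrightarrow> (\<forall>t\<in>T. c t \<in> R \<and> g t \<in> S) \<Longrightarrow> (\<Sum>t\<in>T. c t * g t) \<in> gen R S"
proof (induction T rule: finite_induct)
  case empty then show ?case by (simp add: gen_0)
next
  case (insert t T)
  then show ?case by (auto intro!: gen_add[OF R0 Radd] gen_single)
qed

lemma gen_least:
  assumes "0 \<in> M" "\<forall>x\<in>M. \<forall>y\<in>M. x + y \<in> M" "\<forall>r\<in>R. \<forall>x\<in>M. r * x \<in> M" "S \<subseteq> M"
  shows "gen R S \<subseteq> M"
proof
  fix x assume "x \<in> gen R S"
  then obtain T c where T: "finite T" "T \<subseteq> S" "\<forall>s\<in>T. c s \<in> R" "x = (\<Sum>s\<in>T. c s * s)"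
    by (rule genE)
  show "x \<in> M" unfolding T(4) using assms T by (intro sum_closed) auto
qed

lemma gen_smult:
  assumes "subring_of R" "r \<in> R" "x \<in> gen R S"
  shows "r * x \<in> gen R S"
proof -
  obtain T c where T: "finite T" "T \<subseteq> S" "\<forall>s\<in>T. c s \<in> R" "x = (\<Sum>s\<in>T. c s * s)"
    using assms(3) by (rule genE)
  have "r * x = (\<Sum>s\<in>T. (r * c s) * s)" unfolding T(4) by (simp add: sum_distrib_left mult.assoc)
  moreover have "\<forall>s\<in>T. r * c s \<in> R" using assms(1,2) T(3) unfolding subring_of_def by auto
  ultimately show ?thesis using genI[OF T(1,2)] by auto
qed

lemma gen_closed:
  assumes "subring_of R"
  shows "0 \<in> gen R S" "\<forall>x\<in>gen R S. \<forall>y\<in>gen R S. x + y \<in> gen R S"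
    "\<forall>r\<in>R. \<forall>x\<in>gen R S. r * x \<in> gen R S"
  using gen_0 gen_add[OF subring_0[OF assms] subring_add[OF assms]] gen_smult[OF assms] by auto

lemma gen_gen: "subring_of R \<Longrightarrow> gen R (gen R S) = gen R S"
  by (rule antisym, rule gen_least[OF gen_closed]) (auto intro: gen_mono gen_base subring_1)

lemma gen_subset_ideal: "is_ideal R I \<Longrightarrow> S \<subseteq> I \<Longrightarrow> gen R S \<subseteq> I"
  unfolding is_ideal_def by (intro gen_least) auto

lemma gen_ideal: "subring_of R \<Longrightarrow> S \<subseteq> R \<Longrightarrow> is_ideal R (gen R S)"
  unfolding is_ideal_def using gen_closed[of R S] gen_least[of R R S]
  by (auto simp: subring_0 subring_add subring_mult)

lemma submod_gen: "subring_of R \<Longrightarrow> s \<in> S \<Longrightarrow> s \<noteq> 0 \<Longrightarrow> submod R (gen R S)"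
  unfolding submod_def using gen_closed[of R S] gen_base[of s S R] subring_1 by fastforce

lemma gen_finite_support:
  "finite S0 \<Longrightarrow> S0 \<subseteq> gen R C \<Longrightarrow> \<exists>C'. finite C' \<and> C' \<subseteq> C \<and> S0 \<subseteq> gen R C'"
proof (induction S0 rule: finite_induct)
  case empty then show ?case by auto
next
  case (insert x S0)
  then obtain C1 where C1: "finite C1" "C1 \<subseteq> C" "S0 \<subseteq> gen R C1" by auto
  obtain T c where T: "finite T" "T \<subseteq> C" "\<forall>s\<in>T. c s \<in> R" "x = (\<Sum>s\<in>T. c s * s)"
    using insert(4) by (auto elim: genE)
  have "x \<in> gen R (C1 \<union> T)" using genI[of T "C1 \<union> T" c R] T by auto
  moreover have "S0 \<subseteq> gen R (C1 \<union> T)" using C1(3) gen_mono[of C1 "C1 \<union> T" R] by auto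
  ultimately show ?case using C1 T by (intro exI[of _ "C1 \<union> T"]) auto
qed

lemma colon_ideal:
  assumes sr: "subring_of R" and I: "is_ideal R I" and a: "a \<in> R" "a \<notin> I"
  shows "is_ideal R {y \<in> R. y * a \<in> I}" "I \<subseteq> {y \<in> R. y * a \<in> I}" "{y \<in> R. y * a \<in> I} \<noteq> R"
proof -
  show "is_ideal R {y \<in> R. y * a \<in> I}" unfolding is_ideal_def
    using ideal_0[OF I] ideal_add[OF I] ideal_mult[OF I] sr
    by (auto simp: distrib_right mult.assoc subring_of_def)
  show "I \<subseteq> {y \<in> R. y * a \<in> I}" using ideal_sub[OF I] ideal_mult2[OF I a(1)] by auto
  show "{y \<in> R. y * a \<in> I} \<noteq> R"
  proof
    assume "{y \<in> R. y * a \<in> I} = R"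
    then have "1 * a \<in> I" using subring_1[OF sr] by blast
    then show False using a(2) by simp
  qed
qed

text \<open>For any operation \<open>cl\<close> on ideals that is extensive and compatible with colon ideals,
  the maximal proper quasi-\<open>cl\<close>-ideals are prime: for \<open>a \<notin> I\<close> the colon ideal \<open>(I : a)\<close> is a
  proper quasi-\<open>cl\<close>-ideal containing \<open>I\<close>, hence equal to \<open>I\<close>.\<close>

lemma QMax_prime:
  assumes sr: "subring_of R"
    and ext: "\<And>I. is_ideal R I \<Longrightarrow> I \<noteq> {0} \<Longrightarrow> I \<subseteq> cl I"
    and colon: "\<And>I a x. quasi_ideal R cl I \<Longrightarrow> a \<in> R \<Longrightarrow> a \<notin> I \<Longrightarrow>
                  x \<in> cl {y \<in> R. y * a \<in> I} \<Longrightarrow> x * a \<in> cl I"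
    and I: "I \<in> QMax R cl"
  shows "I \<in> Spec R"
proof -
  have qI: "quasi_ideal R cl I" "I \<noteq> R"
    and maxI: "\<And>J. quasi_ideal R cl J \<Longrightarrow> J \<noteq> R \<Longrightarrow> I \<subseteq> J \<Longrightarrow> J = I"
    using I unfolding QMax_def by auto
  have idI: "is_ideal R I" and I0: "I \<noteq> {0}" and Iq: "cl I \<inter> R = I"
    using qI unfolding quasi_ideal_def by auto
  have "b \<in> I" if ab: "a \<in> R" "b \<in> R" "a * b \<in> I" and na: "a \<notin> I" for a b
  proof -
    define C where "C = {y \<in> R. y * a \<in> I}"
    note C = colon_ideal[OF sr idI ab(1) na, folded C_def]
    have C0: "C \<noteq> {0}" using C(2) I0 ideal_0[OF idI] by blast
    have "cl C \<inter> R \<subseteq> C"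
      using colon[OF qI(1) ab(1) na] Iq subring_mult[OF sr] ab(1) unfolding C_def by blast
    moreover have "C \<subseteq> cl C \<inter> R" using ext[OF C(1) C0] ideal_sub[OF C(1)] by blast
    ultimately have "quasi_ideal R cl C" unfolding quasi_ideal_def using C(1) C0 by blast
    then have "C = I" using maxI C(2,3) by blast
    moreover have "b \<in> C" using ab unfolding C_def by (simp add: mult.commute)
    ultimately show "b \<in> I" by simp
  qed
  then show ?thesis unfolding Spec_def using idI qI(2) by blast
qed

lemma chain_Union_ideal:
  assumes C: "\<C> \<noteq> {}" "\<And>X. X \<in> \<C> \<Longrightarrow> is_ideal R X"
    and chain: "\<And>X Y. X \<in> \<C> \<Longrightarrow> Y \<in> \<C> \<Longrightarrow> X \<subseteq> Y \<or> Y \<subseteq> X"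
  shows "is_ideal R (\<Union>\<C>)"
  unfolding is_ideal_def
proof (intro conjI ballI)
  show "\<Union>\<C> \<subseteq> R" using C(2) ideal_sub by blast
  show "0 \<in> \<Union>\<C>" using C ideal_0 by blast
next
  fix x y assume "x \<in> \<Union>\<C>" "y \<in> \<Union>\<C>"
  then obtain X Y where "X \<in> \<C>" "Y \<in> \<C>" "x \<in> X" "y \<in> Y" by auto
  then show "x + y \<in> \<Union>\<C>" using chain[of X Y] C(2) ideal_add by blast
next
  fix r x assume "r \<in> R" "x \<in> \<Union>\<C>"
  then show "r * x \<in> \<Union>\<C>" using C(2) ideal_mult by blast
qed

text \<open>Throughout, \<open>R\<close> is a subring of a field (whose quotient field need not be the whole
  field unless stated), and \<open>st\<close> a semistar operation on \<open>R\<close>.\<close>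

locale field_subring =
  fixes R :: "'f::field set"
  assumes sr: "subring_of R"

locale semistar_subring = field_subring R for R :: "'f::field set" +
  fixes st :: "'f set \<Rightarrow> 'f set"
  assumes ss: "semistar R st"
begin

lemma st_submod: "submod R E \<Longrightarrow> submod R (st E)"
  using ss[unfolded semistar_def, THEN conjunct1] by simp
lemma st_scale: "submod R E \<Longrightarrow> x \<noteq> 0 \<Longrightarrow> st ((\<lambda>e. x * e) ` E) = (\<lambda>e. x * e) ` st E"
  using ss[unfolded semistar_def, THEN conjunct2, THEN conjunct1] by simp
lemma st_mono: "submod R E \<Longrightarrow> submod R F \<Longrightarrow> E \<subseteq> F \<Longrightarrow> st E \<subseteq> st F"
  using ss[unfolded semistar_def, THEN conjunct2, THEN conjunct2, THEN conjunct1] by simp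
lemma st_ext: "submod R E \<Longrightarrow> E \<subseteq> st E"
  using ss[unfolded semistar_def, THEN conjunct2, THEN conjunct2, THEN conjunct2, THEN conjunct1] by simp
lemma st_idem: "submod R E \<Longrightarrow> st (st E) = st E"
  using ss[unfolded semistar_def, THEN conjunct2, THEN conjunct2, THEN conjunct2, THEN conjunct2] by simp

lemma submod_0: "submod R E \<Longrightarrow> 0 \<in> E" unfolding submod_def by auto
lemma submod_add: "submod R E \<Longrightarrow> x \<in> E \<Longrightarrow> y \<in> E \<Longrightarrow> x + y \<in> E" unfolding submod_def by auto
lemma submod_mult: "submod R E \<Longrightarrow> r \<in> R \<Longrightarrow> x \<in> E \<Longrightarrow> r * x \<in> E" unfolding submod_def by auto

lemma R_submod: "submod R R"
  using sr subring_1[OF sr] unfolding submod_def subring_of_def by force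

lemma one_st_R: "1 \<in> st R"
  using st_ext[OF R_submod] subring_1[OF sr] by blast

lemma fg_frac_submod: "fg_frac R F \<Longrightarrow> submod R F"
proof -
  assume "fg_frac R F"
  then obtain S where S: "F = gen R S" "F \<noteq> {0}" unfolding fg_frac_def by blast
  have "S \<noteq> {} \<and> S \<noteq> {0}"
    using S gen_least[of "{0}" R S] gen_0[of R S] by auto
  then obtain s where "s \<in> S" "s \<noteq> 0" by blast
  then show ?thesis using submod_gen[OF sr] S(1) by blast
qed

lemma fg_single: "x \<noteq> 0 \<Longrightarrow> fg_frac R (gen R {x})"
  using gen_base[of x "{x}" R] subring_1[OF sr] unfolding fg_frac_def by blast

lemma submod_scale:
  assumes E: "submod R E" and a: "a \<noteq> 0"
  shows "submod R ((\<lambda>e. a * e) ` E)"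
  unfolding submod_def
proof (intro conjI ballI)
  show "0 \<in> (\<lambda>e. a * e) ` E" using submod_0[OF E] by (auto intro!: image_eqI[of 0 _ 0])
  obtain y where "y \<in> E" "y \<noteq> 0" using E unfolding submod_def by auto
  then show "(\<lambda>e. a * e) ` E \<noteq> {0}" using a by (auto dest!: equalityD1)
next
  fix x y assume "x \<in> (\<lambda>e. a * e) ` E" "y \<in> (\<lambda>e. a * e) ` E"
  then obtain u v where "u \<in> E" "v \<in> E" "x = a * u" "y = a * v" by auto
  then have "u + v \<in> E" "x + y = a * (u + v)" using submod_add[OF E] by (auto simp: distrib_left)
  then show "x + y \<in> (\<lambda>e. a * e) ` E" by blast
next
  fix r x assume "r \<in> R" "x \<in> (\<lambda>e. a * e) ` E"
  then obtain u where "u \<in> E" "x = a * u" by auto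
  then show "r * x \<in> (\<lambda>e. a * e) ` E" using submod_mult[OF E \<open>r \<in> R\<close>]
    by (auto simp: mult.left_commute)
qed

lemma star_fI: "fg_frac R F \<Longrightarrow> F \<subseteq> E \<Longrightarrow> x \<in> st F \<Longrightarrow> x \<in> star_f R st E"
  unfolding star_f_def by blast
lemma star_fE: "x \<in> star_f R st E \<Longrightarrow> (\<And>F. fg_frac R F \<Longrightarrow> F \<subseteq> E \<Longrightarrow> x \<in> st F \<Longrightarrow> thesis) \<Longrightarrow> thesis"
  unfolding star_f_def by blast
lemma star_f_mono: "E \<subseteq> E' \<Longrightarrow> star_f R st E \<subseteq> star_f R st E'"
  unfolding star_f_def by blast

lemma star_f_le: "E \<subseteq> R \<Longrightarrow> star_f R st E \<subseteq> st R"
proof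
  fix x assume "E \<subseteq> R" "x \<in> star_f R st E"
  then obtain F where F: "fg_frac R F" "F \<subseteq> E" "x \<in> st F" by (auto elim: star_fE)
  have "st F \<subseteq> st R" using st_mono[OF fg_frac_submod[OF F(1)] R_submod] F(2) \<open>E \<subseteq> R\<close> by blast
  then show "x \<in> st R" using F(3) by blast
qed

lemma one_in_st_imp: "submod R G \<Longrightarrow> 1 \<in> st G \<Longrightarrow> st R \<subseteq> st G"
proof -
  assume G: "submod R G" and 1: "1 \<in> st G"
  have "R \<subseteq> st G" using submod_mult[OF st_submod[OF G] _ 1] by auto
  then have "st R \<subseteq> st (st G)" by (intro st_mono R_submod st_submod G)
  then show ?thesis using st_idem[OF G] by simp
qed

lemma fg_exists: "is_ideal R E \<Longrightarrow> E \<noteq> {0} \<Longrightarrow> \<exists>G. fg_frac R G \<and> G \<subseteq> E"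
proof -
  assume E: "is_ideal R E" "E \<noteq> {0}"
  then obtain x where x: "x \<in> E" "x \<noteq> 0" using ideal_0 by blast
  have "gen R {x} \<subseteq> E" using gen_subset_ideal[OF E(1)] x by blast
  then show ?thesis using fg_single[OF x(2)] by blast
qed

lemma fg_combine:
  assumes E: "is_ideal R E" and G1: "fg_frac R G1" "G1 \<subseteq> E" and G2: "fg_frac R G2" "G2 \<subseteq> E"
  shows "\<exists>G. fg_frac R G \<and> G \<subseteq> E \<and> G1 \<subseteq> G \<and> G2 \<subseteq> G"
proof -
  obtain S1 where S1: "finite S1" "G1 = gen R S1" "G1 \<noteq> {0}" using G1 unfolding fg_frac_def by auto
  obtain S2 where S2: "finite S2" "G2 = gen R S2" using G2 unfolding fg_frac_def by auto
  have sub: "G1 \<subseteq> gen R (S1 \<union> S2)" "G2 \<subseteq> gen R (S1 \<union> S2)"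
    using S1(2) S2(2) gen_mono[of S1 "S1 \<union> S2" R] gen_mono[of S2 "S1 \<union> S2" R] by auto
  have "S1 \<union> S2 \<subseteq> E" using S1(2) S2(2) G1(2) G2(2) gen_base[OF _ subring_1[OF sr]] by blast
  then have "gen R (S1 \<union> S2) \<subseteq> E" by (rule gen_subset_ideal[OF E])
  moreover have "fg_frac R (gen R (S1 \<union> S2))"
    unfolding fg_frac_def using S1 S2(1) sub(1) gen_0[of R S1] by blast
  ultimately show ?thesis using sub by blast
qed

lemma star_f_finite_cover:
  assumes E: "is_ideal R E" "E \<noteq> {0}"
  shows "finite A \<Longrightarrow> A \<subseteq> star_f R st E \<Longrightarrow> \<exists>G. fg_frac R G \<and> G \<subseteq> E \<and> A \<subseteq> st G"
proof (induction A rule: finite_induct)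
  case empty then show ?case using fg_exists[OF E] by blast
next
  case (insert x A)
  then obtain G1 where G1: "fg_frac R G1" "G1 \<subseteq> E" "A \<subseteq> st G1" by auto
  from insert obtain F where F: "fg_frac R F" "F \<subseteq> E" "x \<in> st F" by (auto elim: star_fE)
  obtain G where G: "fg_frac R G" "G \<subseteq> E" "G1 \<subseteq> G" "F \<subseteq> G"
    using fg_combine[OF E(1) G1(1,2) F(1,2)] by blast
  have "st G1 \<subseteq> st G" "st F \<subseteq> st G"
    using st_mono[OF fg_frac_submod[OF G1(1)] fg_frac_submod[OF G(1)] G(3)]
      st_mono[OF fg_frac_submod[OF F(1)] fg_frac_submod[OF G(1)] G(4)] .
  then show ?case using G(1,2) G1(3) F(3) by blast
qed

lemma ideal_sub_star_f: "is_ideal R E \<Longrightarrow> E \<noteq> {0} \<Longrightarrow> E \<subseteq> star_f R st E"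
proof
  fix x assume E: "is_ideal R E" "E \<noteq> {0}" and x: "x \<in> E"
  show "x \<in> star_f R st E"
  proof (cases "x = 0")
    case True
    obtain G where "fg_frac R G" "G \<subseteq> E" using fg_exists[OF E] by blast
    then show ?thesis using True submod_0[OF st_submod[OF fg_frac_submod]] star_fI by blast
  next
    case False
    have "gen R {x} \<subseteq> E" using gen_subset_ideal[OF E(1)] x by auto
    moreover have fg: "fg_frac R (gen R {x})" using fg_single False by blast
    moreover have "x \<in> st (gen R {x})"
      using st_ext[OF fg_frac_submod[OF fg]] gen_base[of x "{x}" R] subring_1[OF sr] by auto
    ultimately show ?thesis using star_fI[of "gen R {x}" E x] by blast
  qed
qed

lemma star_f_star_f:
  assumes E: "is_ideal R E" "E \<noteq> {0}"
  shows "star_f R st (star_f R st E) \<subseteq> star_f R st E"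
proof
  fix x assume "x \<in> star_f R st (star_f R st E)"
  then obtain F where F: "fg_frac R F" "F \<subseteq> star_f R st E" "x \<in> st F" by (auto elim: star_fE)
  obtain S0 where S0: "finite S0" "F = gen R S0" using F(1) unfolding fg_frac_def by auto
  have "S0 \<subseteq> star_f R st E" using F(2) S0(2) gen_base subring_1[OF sr] by blast
  then obtain G where G: "fg_frac R G" "G \<subseteq> E" "S0 \<subseteq> st G"
    using star_f_finite_cover[OF E S0(1)] by auto
  have sG: "submod R (st G)" using st_submod fg_frac_submod G(1) by blast
  have "F \<subseteq> st G" unfolding S0(2) using sG G(3) unfolding submod_def by (intro gen_least) auto
  then have "st F \<subseteq> st G" using st_mono[OF fg_frac_submod[OF F(1)] sG] st_idem fg_frac_submod G(1) by blast
  then show "x \<in> star_f R st E" using star_fI[OF G(1,2)] F(3) by blast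
qed

lemma star_f_inter_ideal:
  assumes E: "is_ideal R E" "E \<noteq> {0}"
  shows "is_ideal R (star_f R st E \<inter> R)"
  unfolding is_ideal_def
proof (intro conjI ballI)
  show "star_f R st E \<inter> R \<subseteq> R" by blast
  show "0 \<in> star_f R st E \<inter> R" using ideal_sub_star_f[OF E] ideal_0[OF E(1)] subring_0[OF sr] by blast
next
  fix x y assume xy: "x \<in> star_f R st E \<inter> R" "y \<in> star_f R st E \<inter> R"
  then obtain G where G: "fg_frac R G" "G \<subseteq> E" "{x, y} \<subseteq> st G"
    using star_f_finite_cover[OF E, of "{x, y}"] by auto
  have "x + y \<in> st G" using G submod_add[OF st_submod[OF fg_frac_submod[OF G(1)]]] by auto
  then show "x + y \<in> star_f R st E \<inter> R" using star_fI[OF G(1,2)] xy subring_add[OF sr] by blast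
next
  fix r x assume r: "r \<in> R" and x: "x \<in> star_f R st E \<inter> R"
  then obtain G where G: "fg_frac R G" "G \<subseteq> E" "x \<in> st G" by (auto elim: star_fE)
  have "r * x \<in> st G" using G submod_mult[OF st_submod[OF fg_frac_submod[OF G(1)]] r] by auto
  then show "r * x \<in> star_f R st E \<inter> R" using star_fI[OF G(1,2)] r x subring_mult[OF sr] by blast
qed

lemma star_f_closure_quasi:
  assumes E: "is_ideal R E" "E \<noteq> {0}" and ne: "star_f R st E \<noteq> st R"
  shows "quasi_ideal R (star_f R st) (star_f R st E \<inter> R)" "star_f R st E \<inter> R \<noteq> R"
    "E \<subseteq> star_f R st E \<inter> R"
proof -
  let ?J = "star_f R st E \<inter> R"
  show EJ: "E \<subseteq> ?J" using ideal_sub_star_f[OF E] ideal_sub[OF E(1)] by auto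
  show "?J \<noteq> R"
  proof
    assume "?J = R"
    then have "1 \<in> star_f R st E" using subring_1[OF sr] by blast
    then obtain G where G: "fg_frac R G" "G \<subseteq> E" "1 \<in> st G" by (rule star_fE)
    have "st R \<subseteq> star_f R st E" using one_in_st_imp[OF fg_frac_submod[OF G(1)] G(3)] star_fI[OF G(1,2)] by blast
    then show False using star_f_le[OF ideal_sub[OF E(1)]] ne by blast
  qed
  have idJ: "is_ideal R ?J" by (rule star_f_inter_ideal[OF E])
  have J0: "?J \<noteq> {0}" using EJ E(2) ideal_0[OF E(1)] by auto
  have "star_f R st ?J \<subseteq> star_f R st (star_f R st E)" by (rule star_f_mono) blast
  then have "star_f R st ?J \<inter> R \<subseteq> ?J" using star_f_star_f[OF E] by blast
  moreover have "?J \<subseteq> star_f R st ?J \<inter> R" using ideal_sub_star_f[OF idJ J0] by blast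
  ultimately have "star_f R st ?J \<inter> R = ?J" by (rule equalityI)
  then show "quasi_ideal R (star_f R st) ?J" unfolding quasi_ideal_def using idJ J0 by simp
qed

text \<open>Colon compatibility of \<open>star_f\<close>: scaling a finitely generated \<open>F \<subseteq> (I : a)\<close> by \<open>a\<close>
  gives a finitely generated submodule of \<open>I\<close>, and \<open>st\<close> commutes with scaling.\<close>

lemma scale_gen: "(\<lambda>e. a * e) ` gen R S \<subseteq> gen R ((\<lambda>e. a * e) ` S)"
proof
  fix y assume "y \<in> (\<lambda>e. a * e) ` gen R S"
  then obtain z where z: "z \<in> gen R S" "y = a * z" by blast
  obtain T c where T: "finite T" "T \<subseteq> S" "\<forall>s\<in>T. c s \<in> R" "z = (\<Sum>s\<in>T. c s * s)"
    using z(1) by (rule genE)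
  have "y = (\<Sum>s\<in>T. c s * (a * s))" using z(2) T(4) by (simp add: sum_distrib_left mult.left_commute)
  also have "\<dots> \<in> gen R ((\<lambda>e. a * e) ` S)"
    using T by (intro gen_sum[OF subring_0[OF sr] subring_add[OF sr]]) auto
  finally show "y \<in> gen R ((\<lambda>e. a * e) ` S)" .
qed

lemma star_f_colon:
  assumes I: "quasi_ideal R (star_f R st) I" and a: "a \<in> R" "a \<notin> I"
    and x: "x \<in> star_f R st {y \<in> R. y * a \<in> I}"
  shows "x * a \<in> star_f R st I"
proof -
  have idI: "is_ideal R I" using I unfolding quasi_ideal_def by blast
  have a0: "a \<noteq> 0" using a(2) ideal_0[OF idI] by auto
  obtain F where F: "fg_frac R F" "F \<subseteq> {y \<in> R. y * a \<in> I}" "x \<in> st F" using x by (auto elim: star_fE)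
  obtain S0 where S0: "finite S0" "F = gen R S0" using F(1) unfolding fg_frac_def by auto
  define F' where "F' = gen R ((\<lambda>e. a * e) ` S0)"
  have aF: "(\<lambda>e. a * e) ` F \<subseteq> F'" unfolding F'_def S0(2) by (rule scale_gen)
  have "S0 \<subseteq> {y \<in> R. y * a \<in> I}" using F(2) S0(2) gen_base subring_1[OF sr] by blast
  then have F'I: "F' \<subseteq> I" unfolding F'_def by (intro gen_subset_ideal[OF idI]) (auto simp: mult.commute)
  have smF: "submod R F" using fg_frac_submod F(1) by blast
  obtain y where y: "y \<in> F" "y \<noteq> 0" using smF unfolding submod_def by auto
  have fgF': "fg_frac R F'" unfolding fg_frac_def F'_def using S0(1) aF y a0 F'_def by auto
  have "a * x \<in> (\<lambda>e. a * e) ` st F" using F(3) by auto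
  also have "\<dots> = st ((\<lambda>e. a * e) ` F)" using st_scale[OF smF a0] by simp
  also have "\<dots> \<subseteq> st F'" using st_mono[OF submod_scale[OF smF a0] fg_frac_submod[OF fgF'] aF] .
  finally show ?thesis using star_fI[OF fgF' F'I] by (simp add: mult.commute)
qed

lemma QMax_star_f_Spec: "P \<in> QMax R (star_f R st) \<Longrightarrow> P \<in> Spec R"
  by (rule QMax_prime[OF sr ideal_sub_star_f star_f_colon])

text \<open>The union of a nonempty chain of quasi-\<open>star_f\<close>-ideals is again one; since \<open>star_f\<close> has
  finite type, a finitely generated \<open>F \<subseteq> \<Union>\<C>\<close> already lies in one member of the chain.\<close>

lemma chain_Union_quasi:
  assumes C: "\<C> \<noteq> {}" "subset.chain A \<C>"
    and A: "\<And>X. X \<in> A \<Longrightarrow> quasi_ideal R (star_f R st) X \<and> X \<noteq> R"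
  shows "quasi_ideal R (star_f R st) (\<Union>\<C>)" "\<Union>\<C> \<noteq> R"
proof -
  have mem: "\<And>X. X \<in> \<C> \<Longrightarrow> quasi_ideal R (star_f R st) X \<and> X \<noteq> R"
    using C(2) A unfolding subset.chain_def by blast
  have idX: "\<And>X. X \<in> \<C> \<Longrightarrow> is_ideal R X" using mem unfolding quasi_ideal_def by auto
  have "\<And>X Y. X \<in> \<C> \<Longrightarrow> Y \<in> \<C> \<Longrightarrow> X \<subseteq> Y \<or> Y \<subseteq> X"
    using C(2) unfolding subset.chain_def by auto
  note idU = chain_Union_ideal[OF C(1) idX this]
  obtain X0 where X0: "X0 \<in> \<C>" using C(1) by auto
  have U0: "\<Union>\<C> \<noteq> {0}"
  proof
    assume "\<Union>\<C> = {0}"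
    then have "X0 \<subseteq> {0}" using X0 by blast
    then show False using mem[OF X0] ideal_0[OF idX[OF X0]] unfolding quasi_ideal_def by blast
  qed
  have "star_f R st (\<Union>\<C>) \<inter> R \<subseteq> \<Union>\<C>"
  proof
    fix x assume "x \<in> star_f R st (\<Union>\<C>) \<inter> R"
    then obtain F where F: "fg_frac R F" "F \<subseteq> \<Union>\<C>" "x \<in> st F" "x \<in> R" by (auto elim: star_fE)
    obtain S0 where S0: "finite S0" "F = gen R S0" using F(1) unfolding fg_frac_def by auto
    have "S0 \<subseteq> \<Union>\<C>" using F(2) S0 gen_base subring_1[OF sr] by blast
    then obtain X where X: "X \<in> \<C>" "S0 \<subseteq> X" using finite_subset_Union_chain[OF S0(1) _ C] by blast
    have "F \<subseteq> X" unfolding S0(2) using gen_subset_ideal[OF idX[OF X(1)] X(2)] .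
    then have "x \<in> star_f R st X \<inter> R" using star_fI[OF F(1)] F by auto
    then show "x \<in> \<Union>\<C>" using mem[OF X(1)] X(1) unfolding quasi_ideal_def by auto
  qed
  moreover have "\<Union>\<C> \<subseteq> star_f R st (\<Union>\<C>) \<inter> R" using ideal_sub_star_f[OF idU U0] ideal_sub[OF idU] by auto
  ultimately show "quasi_ideal R (star_f R st) (\<Union>\<C>)" unfolding quasi_ideal_def using idU U0 by auto
  show "\<Union>\<C> \<noteq> R"
  proof
    assume "\<Union>\<C> = R"
    then obtain X where "X \<in> \<C>" "1 \<in> X" using subring_1[OF sr] by auto
    then show False using mem ideal_one idX by blast
  qed
qed

lemma QMax_exists:
  assumes J: "quasi_ideal R (star_f R st) J" "J \<noteq> R"
  shows "\<exists>P \<in> QMax R (star_f R st). J \<subseteq> P"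
proof -
  define A where "A = {I. quasi_ideal R (star_f R st) I \<and> I \<noteq> R \<and> J \<subseteq> I}"
  have "\<exists>M\<in>A. \<forall>X\<in>A. M \<subseteq> X \<longrightarrow> X = M"
  proof (rule subset_Zorn_nonempty)
    show "A \<noteq> {}" using J unfolding A_def by auto
  next
    fix \<C> assume C: "\<C> \<noteq> {}" "subset.chain A \<C>"
    have J\<C>: "J \<subseteq> \<Union>\<C>" using C unfolding subset.chain_def A_def by blast
    have hA: "\<And>X. X \<in> A \<Longrightarrow> quasi_ideal R (star_f R st) X \<and> X \<noteq> R" unfolding A_def by blast
    show "\<Union>\<C> \<in> A" using chain_Union_quasi[OF C hA] J\<C> unfolding A_def by blast
  qed
  then obtain M where M: "M \<in> A" "\<forall>X\<in>A. M \<subseteq> X \<longrightarrow> X = M" by blast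
  have "M \<in> QMax R (star_f R st)" unfolding QMax_def
  proof (intro CollectI conjI allI impI)
    show "quasi_ideal R (star_f R st) M" "M \<noteq> R" using M(1) unfolding A_def by auto
  next
    fix X assume "quasi_ideal R (star_f R st) X \<and> X \<noteq> R \<and> M \<subseteq> X"
    then show "X = M" using M unfolding A_def by blast
  qed
  then show ?thesis using M(1) unfolding A_def by blast
qed

end

lemma polys_overI: "(\<And>i. coeff p i \<in> A) \<Longrightarrow> p \<in> polys_over A"
  unfolding polys_over_def by auto
lemma polys_overD: "p \<in> polys_over A \<Longrightarrow> coeff p i \<in> A"
  unfolding polys_over_def by auto

lemma polys_over_0: "0 \<in> A \<Longrightarrow> 0 \<in> polys_over A"
  by (rule polys_overI) simp
lemma polys_over_const: "0 \<in> A \<Longrightarrow> ([:d:] \<in> polys_over A) = (d \<in> A)"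
  unfolding polys_over_def by (auto simp: coeff_pCons split: nat.splits)
lemma polys_over_1: "0 \<in> A \<Longrightarrow> 1 \<in> A \<Longrightarrow> 1 \<in> polys_over A"
  using polys_over_const[of A 1] by (simp add: one_pCons)
lemma polys_over_mono: "A \<subseteq> B \<Longrightarrow> polys_over A \<subseteq> polys_over B"
  unfolding polys_over_def by auto
lemma polys_over_monom: "0 \<in> A \<Longrightarrow> c \<in> A \<Longrightarrow> monom c n \<in> polys_over A"
  unfolding polys_over_def by (auto simp: coeff_monom)

lemma polys_over_sr_add: "subring_of R \<Longrightarrow> p \<in> polys_over R \<Longrightarrow> q \<in> polys_over R \<Longrightarrow> p + q \<in> polys_over R"
  unfolding polys_over_def by (auto dest!: subring_add)
lemma polys_over_sr_uminus: "subring_of R \<Longrightarrow> p \<in> polys_over R \<Longrightarrow> - p \<in> polys_over R"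
  unfolding polys_over_def using subring_uminus by auto
lemma polys_over_sr_mult: "subring_of R \<Longrightarrow> p \<in> polys_over R \<Longrightarrow> q \<in> polys_over R \<Longrightarrow> p * q \<in> polys_over R"
  by (rule polys_overI, unfold coeff_mult)
     (auto intro!: sum_closed subring_0 subring_add subring_mult dest: polys_overD)
lemma polys_over_sr_diff: "subring_of R \<Longrightarrow> p \<in> polys_over R \<Longrightarrow> q \<in> polys_over R \<Longrightarrow> p - q \<in> polys_over R"
  using polys_over_sr_add polys_over_sr_uminus by (metis diff_conv_add_uminus)
lemma polys_over_smult: "subring_of R \<Longrightarrow> d \<in> R \<Longrightarrow> p \<in> polys_over R \<Longrightarrow> smult d p \<in> polys_over R"
  unfolding polys_over_def by (auto intro!: subring_mult)
lemma polys_over_ideal_mult: "is_ideal R I \<Longrightarrow> p \<in> polys_over R \<Longrightarrow> q \<in> polys_over I \<Longrightarrow> p * q \<in> polys_over I"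
  by (rule polys_overI, unfold coeff_mult)
     (auto intro!: ideal_sum ideal_mult dest: polys_overD)
lemma polys_over_ideal_add: "is_ideal R I \<Longrightarrow> p \<in> polys_over I \<Longrightarrow> q \<in> polys_over I \<Longrightarrow> p + q \<in> polys_over I"
  unfolding polys_over_def by (auto intro!: ideal_add)

text \<open>If \<open>Q\<close> is a prime of \<open>R\<close>, then \<open>Q[X]\<close> is a prime of \<open>R[X]\<close>: compare the coefficient of
  \<open>X^(i+j)\<close> in \<open>p q\<close>, where \<open>i\<close> and \<open>j\<close> are the least indices of coefficients outside \<open>Q\<close>.\<close>

lemma poly_prime:
  assumes sr: "subring_of R" and Q: "Q \<in> Spec R" and p: "p \<in> polys_over R" and q: "q \<in> polys_over R"
    and pq: "p * q \<in> polys_over Q"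
  shows "p \<in> polys_over Q \<or> q \<in> polys_over Q"
proof (rule ccontr)
  assume "\<not> ?thesis"
  then obtain i0 j0 where "coeff p i0 \<notin> Q" "coeff q j0 \<notin> Q" unfolding polys_over_def by auto
  define i where "i = (LEAST i. coeff p i \<notin> Q)"
  define j where "j = (LEAST j. coeff q j \<notin> Q)"
  have pi: "coeff p i \<notin> Q" and pk: "\<And>k. k < i \<Longrightarrow> coeff p k \<in> Q"
    unfolding i_def using \<open>coeff p i0 \<notin> Q\<close> by (metis LeastI, metis not_less_Least)
  have qj: "coeff q j \<notin> Q" and qk: "\<And>k. k < j \<Longrightarrow> coeff q k \<in> Q"
    unfolding j_def using \<open>coeff q j0 \<notin> Q\<close> by (metis LeastI, metis not_less_Least)
  have idQ: "is_ideal R Q" using Spec_ideal[OF Q] .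
  let ?t = "\<lambda>k. coeff p k * coeff q (i + j - k)"
  have split: "coeff (p * q) (i + j) = ?t i + (\<Sum>k\<in>{..i+j} - {i}. ?t k)"
    unfolding coeff_mult by (subst sum.remove[of _ i]) auto
  have rest: "(\<Sum>k\<in>{..i+j} - {i}. ?t k) \<in> Q"
  proof (rule ideal_sum[OF idQ], rule ballI)
    fix k assume k: "k \<in> {..i+j} - {i}"
    show "?t k \<in> Q"
    proof (cases "k < i")
      case True
      then show ?thesis using ideal_mult2[OF idQ polys_overD[OF q] pk] by blast
    next
      case False
      then have "i + j - k < j" using k by auto
      then show ?thesis using ideal_mult[OF idQ polys_overD[OF p] qk] by blast
    qed
  qed
  have "?t i = coeff (p * q) (i + j) - (\<Sum>k\<in>{..i+j} - {i}. ?t k)" using split by simp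
  also have "\<dots> \<in> Q" using ideal_diff[OF sr idQ polys_overD[OF pq] rest] .
  finally have "coeff p i * coeff q j \<in> Q" by simp
  then show False using Spec_prime[OF Q polys_overD[OF p] polys_overD[OF q]] pi qj by blast
qed

lemma prod_not_in_prime:
  assumes sr: "subring_of R" and Q: "Q \<in> Spec R"
  shows "finite T \<Longrightarrow> (\<forall>t\<in>T. s t \<in> polys_over R \<and> s t \<notin> polys_over Q) \<Longrightarrow>
     prod s T \<in> polys_over R \<and> prod s T \<notin> polys_over Q"
proof (induction T rule: finite_induct)
  case empty
  then show ?case using polys_over_1[OF subring_0[OF sr] subring_1[OF sr]] Spec_one[OF Q]
      polys_over_const[OF ideal_0[OF Spec_ideal[OF Q]], of 1] by (simp add: one_pCons)
next
  case (insert t T)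
  then show ?case using poly_prime[OF sr Q] polys_over_sr_mult[OF sr] by auto
qed

context field_subring
begin

lemma emb_D1 [simp]: "emb p \<in> D1 R \<longleftrightarrow> p \<in> polys_over R"
  unfolding D1_def by auto
lemma D1E: "x \<in> D1 R \<Longrightarrow> (\<And>p. p \<in> polys_over R \<Longrightarrow> x = emb p \<Longrightarrow> thesis) \<Longrightarrow> thesis"
  unfolding D1_def by auto
lemma emb_extX [simp]: "emb p \<in> extX P \<longleftrightarrow> p \<in> polys_over P"
  unfolding extX_def by auto
lemma extXE: "x \<in> extX P \<Longrightarrow> (\<And>p. p \<in> polys_over P \<Longrightarrow> x = emb p \<Longrightarrow> thesis) \<Longrightarrow> thesis"
  unfolding extX_def by auto

lemma D1_subring: "subring_of (D1 R)"
  unfolding subring_of_def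
proof (intro conjI ballI)
  show "0 \<in> D1 R" using polys_over_0[OF subring_0[OF sr]] emb_D1[of 0] by simp
  show "1 \<in> D1 R" using polys_over_1[OF subring_0[OF sr] subring_1[OF sr]] emb_D1[of 1] by simp
next
  fix x y assume "x \<in> D1 R" "y \<in> D1 R"
  then obtain p q where pq: "p \<in> polys_over R" "q \<in> polys_over R" "x = emb p" "y = emb q"
    by (auto elim!: D1E)
  show "x + y \<in> D1 R" using pq polys_over_sr_add[OF sr] by (simp add: emb_add[symmetric])
  show "x * y \<in> D1 R" using pq polys_over_sr_mult[OF sr] by (simp add: emb_mult[symmetric])
  show "- x \<in> D1 R" using pq polys_over_sr_uminus[OF sr] by (simp add: emb_uminus[symmetric])
qed

lemma embK_D1: "d \<in> R \<Longrightarrow> embK d \<in> D1 R"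
  unfolding embK_def using polys_over_const[OF subring_0[OF sr]] by simp
lemma embK_0 [simp]: "embK 0 = 0" unfolding embK_def by simp
lemma embK_eq_0 [simp]: "embK d = 0 \<longleftrightarrow> d = 0" unfolding embK_def by simp
lemma embK_mult: "embK (a * b) = embK a * embK b"
  unfolding embK_def by (simp add: emb_mult[symmetric])
lemma embK_add: "embK (a + b) = embK a + embK b"
  unfolding embK_def by (simp add: emb_add[symmetric])

lemma extX_ideal: "is_ideal R P \<Longrightarrow> is_ideal (D1 R) (extX P)"
  unfolding is_ideal_def[of "D1 R"]
proof (intro conjI ballI)
  assume P: "is_ideal R P"
  show "extX P \<subseteq> D1 R" using polys_over_mono[OF ideal_sub[OF P]] by (auto elim!: extXE)
  show "0 \<in> extX P" using emb_extX[of 0 P] polys_over_0[OF ideal_0[OF P]] by simp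
  fix x y assume "x \<in> extX P" "y \<in> extX P"
  then obtain p q where pq: "p \<in> polys_over P" "q \<in> polys_over P" "x = emb p" "y = emb q"
    by (auto elim!: extXE)
  show "x + y \<in> extX P" using pq polys_over_ideal_add[OF P] by (simp add: emb_add[symmetric])
next
  fix r x assume P: "is_ideal R P" and "r \<in> D1 R" "x \<in> extX P"
  then obtain p q where pq: "p \<in> polys_over R" "q \<in> polys_over P" "r = emb p" "x = emb q"
    by (auto elim!: extXE D1E)
  show "r * x \<in> extX P" using pq polys_over_ideal_mult[OF P] by (simp add: emb_mult[symmetric])
qed

lemma extX_Spec: "P \<in> Spec R \<Longrightarrow> extX P \<in> Spec (D1 R)"
proof -
  assume P: "P \<in> Spec R"
  have idP: "is_ideal R P" using Spec_ideal[OF P] .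
  have "1 \<notin> polys_over P" using Spec_one[OF P] polys_over_const[OF ideal_0[OF idP], of 1]
    by (simp add: one_pCons)
  then have ne: "extX P \<noteq> D1 R" using subring_1[OF D1_subring] emb_extX[of 1 P] by auto
  have "a \<in> extX P \<or> b \<in> extX P" if ab: "a \<in> D1 R" "b \<in> D1 R" "a * b \<in> extX P" for a b
  proof -
    obtain p q where pq: "p \<in> polys_over R" "q \<in> polys_over R" "a = emb p" "b = emb q"
      using ab(1,2) by (auto elim!: D1E)
    then have "p * q \<in> polys_over P" using ab(3) by (simp add: emb_mult[symmetric])
    then show ?thesis using poly_prime[OF sr P pq(1,2)] pq by simp
  qed
  then show ?thesis unfolding Spec_def using extX_ideal[OF idP] ne by blast
qed

lemma contr_extX: "P \<subseteq> R \<Longrightarrow> 0 \<in> P \<Longrightarrow> contr R (extX P) = P"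
  unfolding contr_def embK_def using polys_over_const[of P] by auto

lemma contr_ideal: "is_ideal (D1 R) Q \<Longrightarrow> is_ideal R (contr R Q)"
  unfolding is_ideal_def contr_def
  using embK_D1 sr by (auto simp: embK_mult embK_add subring_of_def)

lemma zero_Spec: "{0} \<in> Spec (D1 R)"
proof -
  have "is_ideal (D1 R) {0}" unfolding is_ideal_def using subring_0[OF D1_subring] by auto
  moreover have "{0} \<noteq> D1 R" using subring_1[OF D1_subring] by (metis one_neq_zero singletonD)
  ultimately show ?thesis unfolding Spec_def by auto
qed

lemma in_content: "emb p \<in> J \<Longrightarrow> coeff p i \<in> content_ideal R J"
  unfolding content_ideal_def by (rule gen_base[OF _ subring_1[OF sr]]) blast

lemma content_mono: "J \<subseteq> J' \<Longrightarrow> content_ideal R J \<subseteq> content_ideal R J'"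
  unfolding content_ideal_def by (rule gen_mono) blast

lemma content_ideal_ideal:
  assumes J: "is_ideal (D1 R) J"
  shows "is_ideal R (content_ideal R J)"
proof -
  have "{coeff p i | p i. emb p \<in> J} \<subseteq> R"
  proof
    fix x assume "x \<in> {coeff p i | p i. emb p \<in> J}"
    then obtain p i where "x = coeff p i" "emb p \<in> J" by blast
    then show "x \<in> R" using ideal_sub[OF J] emb_D1 polys_overD by blast
  qed
  then show ?thesis unfolding content_ideal_def by (rule gen_ideal[OF sr])
qed

lemma content_nz:
  assumes J: "is_ideal (D1 R) J" "J \<noteq> {0}"
  shows "content_ideal R J \<noteq> {0}"
proof -
  obtain x where x: "x \<in> J" "x \<noteq> 0" using J ideal_0 by blast
  then obtain p where p: "x = emb p" using ideal_sub[OF J(1)] by (auto elim: D1E)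
  then obtain i where "coeff p i \<noteq> 0" using x by (metis emb_0 leading_coeff_0_iff)
  moreover have "coeff p i \<in> content_ideal R J" using in_content x p by blast
  ultimately show ?thesis by blast
qed

lemma content_sub_extX:
  assumes J: "is_ideal (D1 R) J" and P: "content_ideal R J \<subseteq> P"
  shows "J \<subseteq> extX P"
proof
  fix x assume "x \<in> J"
  then obtain p where p: "p \<in> polys_over R" "x = emb p" using ideal_sub[OF J] by (auto elim: D1E)
  have "p \<in> polys_over P" using in_content[of p J] \<open>x \<in> J\<close> p P by (intro polys_overI) blast
  then show "x \<in> extX P" using p by simp
qed

lemma extX_sub_content:
  assumes P: "is_ideal R P" and J: "extX P \<subseteq> J"
  shows "P \<subseteq> content_ideal R J"
proof
  fix x assume "x \<in> P"
  then have "emb [:x:] \<in> J" using J polys_over_const[OF ideal_0[OF P]] by auto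
  then show "x \<in> content_ideal R J" using in_content[of "[:x:]" J 0] by simp
qed

end

text \<open>Clearing denominators: if each \<open>c t\<close> becomes a polynomial after multiplication by some
  \<open>s \<in> R[Y] \<setminus> Q[Y]\<close>, a combination \<open>\<Sum> c t \<cdot> e t\<close> with \<open>e t \<in> Q\<close> becomes an element of \<open>Q[Y]\<close>
  after multiplication by a product of such denominators, which is again outside \<open>Q[Y]\<close>.\<close>

lemma clear_denominators:
  assumes sr: "subring_of R" and Q: "Q \<in> Spec R"
  shows "finite T \<Longrightarrow> (\<forall>t\<in>T. e t \<in> Q \<and> (\<exists>f s. f \<in> polys_over R \<and> s \<in> polys_over R \<and>
            s \<notin> polys_over Q \<and> c t * emb s = emb f)) \<Longrightarrow>
         \<exists>\<sigma> g. \<sigma> \<in> polys_over R \<and> \<sigma> \<notin> polys_over Q \<and> g \<in> polys_over Q \<and>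
           emb \<sigma> * (\<Sum>t\<in>T. c t * emb [:e t:]) = emb g"
proof (induction T rule: finite_induct)
  case empty
  have "1 \<in> polys_over R" "1 \<notin> polys_over Q" "0 \<in> polys_over Q"
    using prod_not_in_prime[OF sr Q, of "{}"] polys_over_0[OF ideal_0[OF Spec_ideal[OF Q]]] by auto
  then show ?case by (intro exI[of _ 1] exI[of _ 0]) simp
next
  case (insert t T)
  then obtain \<sigma> g where \<sigma>g: "\<sigma> \<in> polys_over R" "\<sigma> \<notin> polys_over Q" "g \<in> polys_over Q"
    "emb \<sigma> * (\<Sum>t\<in>T. c t * emb [:e t:]) = emb g" by auto
  obtain f s where fs: "f \<in> polys_over R" "s \<in> polys_over R" "s \<notin> polys_over Q" "c t * emb s = emb f"
    using insert(4) by auto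
  have idQ: "is_ideal R Q" using Spec_ideal[OF Q] .
  have "emb (\<sigma> * s) * (\<Sum>t\<in>insert t T. c t * emb [:e t:])
      = emb \<sigma> * (c t * emb s) * emb [:e t:] + emb s * (emb \<sigma> * (\<Sum>t\<in>T. c t * emb [:e t:]))"
    using insert(1,2) by (simp add: emb_mult algebra_simps)
  also have "\<dots> = emb (\<sigma> * f * [:e t:] + s * g)" unfolding fs(4) \<sigma>g(4) by (simp only: emb_mult emb_add)
  finally have eq: "emb (\<sigma> * s) * (\<Sum>t\<in>insert t T. c t * emb [:e t:]) = emb (\<sigma> * f * [:e t:] + s * g)" .
  have "[:e t:] \<in> polys_over Q" using polys_over_const[OF ideal_0[OF idQ]] insert(4) by blast
  then have "\<sigma> * f * [:e t:] + s * g \<in> polys_over Q"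
    using polys_over_ideal_add[OF idQ] polys_over_ideal_mult[OF idQ] polys_over_sr_mult[OF sr] \<sigma>g fs
    by blast
  moreover have "\<sigma> * s \<in> polys_over R" "\<sigma> * s \<notin> polys_over Q"
    using polys_over_sr_mult[OF sr] poly_prime[OF sr Q] \<sigma>g(1,2) fs(2,3) by blast+
  ultimately show ?case using eq by blast
qed

lemma const_in_prime:
  assumes Q: "Q \<in> Spec R" and \<sigma>: "\<sigma> \<in> polys_over R" "\<sigma> \<notin> polys_over Q"
    and a: "a \<in> R" "\<sigma> * [:a:] \<in> polys_over Q"
  shows "a \<in> Q"
proof -
  obtain i where i: "coeff \<sigma> i \<notin> Q" using \<sigma>(2) unfolding polys_over_def by auto
  have "coeff \<sigma> i * a \<in> Q" using polys_overD[OF a(2), of i] by (simp add: mult.commute)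
  then show ?thesis using Spec_prime[OF Q polys_overD[OF \<sigma>(1)] a(1)] i by blast
qed

context semistar_subring
begin

lemma Delta_Spec: "Q \<in> Delta1 R st \<Longrightarrow> Q \<in> Spec (D1 R)"
  unfolding Delta1_def by auto

lemma zero_Delta: "{0} \<in> Delta1 R st"
proof -
  have "contr R {0} = {0}" unfolding contr_def using subring_0[OF sr] by auto
  then show ?thesis unfolding Delta1_def using zero_Spec by auto
qed

lemma QMax_star_f_ne: "P \<in> QMax R (star_f R st) \<Longrightarrow> star_f R st P \<subset> st R"
proof -
  assume P: "P \<in> QMax R (star_f R st)"
  then have idP: "is_ideal R P" and "P \<noteq> R" and q: "star_f R st P \<inter> R = P"
    unfolding QMax_def quasi_ideal_def by auto
  have "1 \<notin> star_f R st P" using ideal_one[OF idP] \<open>P \<noteq> R\<close> q subring_1[OF sr] by blast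
  then show ?thesis using star_f_le[OF ideal_sub[OF idP]] one_st_R by blast
qed

lemma QMax_Delta: "P \<in> QMax R (star_f R st) \<Longrightarrow> extX P \<in> Delta1 R st"
proof -
  assume P: "P \<in> QMax R (star_f R st)"
  have idP: "is_ideal R P" using P unfolding QMax_def quasi_ideal_def by auto
  have "contr R (extX P) = P" using contr_extX[OF ideal_sub[OF idP] ideal_0[OF idP]] .
  then show ?thesis unfolding Delta1_def
    using extX_Spec[OF QMax_star_f_Spec[OF P]] QMax_star_f_ne[OF P] by auto
qed

lemma S1_sub: "S1 R st \<subseteq> polys_over (D1 R)"
  unfolding S1_def by auto
lemma S1_notin: "s \<in> S1 R st \<Longrightarrow> Q \<in> Delta1 R st \<Longrightarrow> s \<notin> polys_over Q"
  unfolding S1_def by auto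
lemma S1I: "s \<in> polys_over (D1 R) \<Longrightarrow> (\<And>Q. Q \<in> Delta1 R st \<Longrightarrow> s \<notin> polys_over Q) \<Longrightarrow> s \<in> S1 R st"
  unfolding S1_def by auto

lemma S1_nz: "s \<in> S1 R st \<Longrightarrow> s \<noteq> 0"
  using S1_notin[OF _ zero_Delta] polys_over_0[of "{0}"] by auto

lemma S1_one: "1 \<in> S1 R st"
  using prod_not_in_prime[OF D1_subring Delta_Spec, of _ "{}"] zero_Delta by (auto intro!: S1I)

lemma S1_mult: "s \<in> S1 R st \<Longrightarrow> t \<in> S1 R st \<Longrightarrow> s * t \<in> S1 R st"
  using poly_prime[OF D1_subring Delta_Spec] polys_over_sr_mult[OF D1_subring] S1_sub
  by (blast intro!: S1I dest: S1_notin)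

lemma D1Y_locE: "x \<in> D1Y_loc R st \<Longrightarrow>
    (\<And>f s. f \<in> polys_over (D1 R) \<Longrightarrow> s \<in> S1 R st \<Longrightarrow> x = emb f / emb s \<Longrightarrow> thesis) \<Longrightarrow> thesis"
  unfolding D1Y_loc_def by blast
lemma D1Y_locI: "f \<in> polys_over (D1 R) \<Longrightarrow> s \<in> S1 R st \<Longrightarrow> emb f / emb s \<in> D1Y_loc R st"
  unfolding D1Y_loc_def by blast

lemma D1Y_loc_0: "0 \<in> D1Y_loc R st"
  using D1Y_locI[OF polys_over_0[OF subring_0[OF D1_subring]] S1_one] by simp
lemma D1Y_loc_1: "1 \<in> D1Y_loc R st"
  using D1Y_locI[OF polys_over_1[OF subring_0[OF D1_subring] subring_1[OF D1_subring]] S1_one] by simp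
lemma D1Y_loc_add: "\<forall>x\<in>D1Y_loc R st. \<forall>y\<in>D1Y_loc R st. x + y \<in> D1Y_loc R st"
proof (intro ballI)
  fix x y assume "x \<in> D1Y_loc R st" "y \<in> D1Y_loc R st"
  then obtain f s g t where fs: "f \<in> polys_over (D1 R)" "s \<in> S1 R st" "x = emb f / emb s"
    and gt: "g \<in> polys_over (D1 R)" "t \<in> S1 R st" "y = emb g / emb t"
    by (auto elim!: D1Y_locE)
  have "emb s \<noteq> 0" "emb t \<noteq> 0" using S1_nz fs gt by auto
  then have "x + y = (emb f * emb t + emb g * emb s) / (emb s * emb t)"
    unfolding fs(3) gt(3) by (rule add_frac_eq)
  also have "\<dots> = emb (f * t + g * s) / emb (s * t)" by (simp only: emb_add emb_mult)
  finally have "x + y = emb (f * t + g * s) / emb (s * t)" .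
  moreover have "s \<in> polys_over (D1 R)" "t \<in> polys_over (D1 R)" using S1_sub fs(2) gt(2) by blast+
  then have "f * t + g * s \<in> polys_over (D1 R)" using fs(1) gt(1)
    by (intro polys_over_sr_add[OF D1_subring] polys_over_sr_mult[OF D1_subring])
  ultimately show "x + y \<in> D1Y_loc R st" using D1Y_locI[OF _ S1_mult[OF fs(2) gt(2)]] by simp
qed

lemma bracket_starI: "emb [:x:] \<in> gen (D1Y_loc R st) ((\<lambda>e. emb [:e:]) ` E) \<Longrightarrow> x \<in> bracket_star R st E"
  unfolding bracket_star_def by simp
lemma bracket_starD: "x \<in> bracket_star R st E \<Longrightarrow> emb [:x:] \<in> gen (D1Y_loc R st) ((\<lambda>e. emb [:e:]) ` E)"
  unfolding bracket_star_def by simp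

lemma subset_bracket_star: "E \<subseteq> bracket_star R st E"
proof
  fix x assume "x \<in> E"
  then have "emb [:x:] \<in> (\<lambda>e. emb [:e:]) ` E" by blast
  from gen_base[OF this D1Y_loc_1] show "x \<in> bracket_star R st E" by (rule bracket_starI)
qed

text \<open>Key step (1): the elements of \<open>Q^{[star]} \<inter> D_1\<close> for \<open>Q \<in> \<Delta>_1\<close>: writing \<open>x\<close> as a combination of elements
  of \<open>Q\<close> with coefficients in the localization and clearing denominators shows \<open>x \<in> Q\<close>.\<close>

lemma bracket_trace_Delta:
  assumes Q: "Q \<in> Delta1 R st" and x: "x \<in> bracket_star R st Q" "x \<in> D1 R"
  shows "x \<in> Q"
proof -
  obtain T c where T: "finite T" "T \<subseteq> (\<lambda>e. emb [:e:]) ` Q" "\<forall>t\<in>T. c t \<in> D1Y_loc R st"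
      "emb [:x:] = (\<Sum>t\<in>T. c t * t)"
    using bracket_starD[OF x(1)] by (rule genE)
  obtain E where E: "E \<subseteq> Q" "T = (\<lambda>e. emb [:e:]) ` E" using T(2) by (auto simp: subset_image_iff)
  have inj: "inj_on (\<lambda>e. emb [:e:]) E" by (auto intro: inj_onI)
  have finE: "finite E" using T(1) E(2) finite_image_iff[OF inj] by simp
  have sum: "emb [:x:] = (\<Sum>e\<in>E. c (emb [:e:]) * emb [:id e:])"
    unfolding T(4) E(2) sum.reindex[OF inj] by simp
  have QS: "Q \<in> Spec (D1 R)" using Delta_Spec[OF Q] .
  have "\<forall>e\<in>E. id e \<in> Q \<and> (\<exists>f s. f \<in> polys_over (D1 R) \<and> s \<in> polys_over (D1 R) \<and>
            s \<notin> polys_over Q \<and> c (emb [:e:]) * emb s = emb f)"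
  proof
    fix e assume "e \<in> E"
    then obtain f s where fs: "f \<in> polys_over (D1 R)" "s \<in> S1 R st" "c (emb [:e:]) = emb f / emb s"
      using T(3) E(2) by (auto elim!: D1Y_locE)
    then show "id e \<in> Q \<and> (\<exists>f s. f \<in> polys_over (D1 R) \<and> s \<in> polys_over (D1 R) \<and>
            s \<notin> polys_over Q \<and> c (emb [:e:]) * emb s = emb f)"
      using \<open>e \<in> E\<close> E(1) S1_sub S1_notin[OF _ Q] S1_nz by (intro conjI exI[of _ f] exI[of _ s]) auto
  qed
  from clear_denominators[OF D1_subring QS finE this]
  obtain \<sigma> g where \<sigma>: "\<sigma> \<in> polys_over (D1 R)" "\<sigma> \<notin> polys_over Q" "g \<in> polys_over Q"
    "emb \<sigma> * (\<Sum>e\<in>E. c (emb [:e:]) * emb [:id e:]) = emb g" by blast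
  have "\<sigma> * [:x:] = g" using \<sigma>(4) unfolding sum[symmetric] emb_mult[symmetric] by simp
  then show ?thesis using const_in_prime[OF QS \<sigma>(1,2) x(2)] \<sigma>(3) by simp
qed

lemma Delta_quasi: "Q \<in> Delta1 R st \<Longrightarrow> Q \<noteq> {0} \<Longrightarrow> quasi_ideal (D1 R) (bracket_star R st) Q"
  unfolding quasi_ideal_def
  using Spec_ideal[OF Delta_Spec] ideal_sub[OF Spec_ideal[OF Delta_Spec]]
    bracket_trace_Delta subset_bracket_star by blast

lemma bracket_star_colon:
  assumes a: "a \<in> D1 R" and x: "x \<in> bracket_star R st {y \<in> D1 R. y * a \<in> I}"
  shows "x * a \<in> bracket_star R st I"
proof -
  obtain T c where T: "finite T" "T \<subseteq> (\<lambda>e. emb [:e:]) ` {y \<in> D1 R. y * a \<in> I}"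
      "\<forall>t\<in>T. c t \<in> D1Y_loc R st" "emb [:x:] = (\<Sum>t\<in>T. c t * t)"
    using bracket_starD[OF x] by (rule genE)
  have "emb [:x * a:] = emb [:a:] * emb [:x:]" by (simp add: emb_mult[symmetric] mult.commute)
  also have "\<dots> = (\<Sum>t\<in>T. c t * (emb [:a:] * t))"
    unfolding T(4) sum_distrib_left by (rule sum.cong[OF refl]) (rule mult.left_commute)
  also have "\<dots> \<in> gen (D1Y_loc R st) ((\<lambda>e. emb [:e:]) ` I)"
  proof (rule gen_sum[OF D1Y_loc_0 D1Y_loc_add T(1)], rule ballI)
    fix t assume t: "t \<in> T"
    then obtain e where e: "e \<in> D1 R" "e * a \<in> I" "t = emb [:e:]" using T(2) by auto
    have "emb [:a:] * t = emb [:e * a:]" using e by (simp add: emb_mult[symmetric] mult.commute)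
    then show "c t \<in> D1Y_loc R st \<and> emb [:a:] * t \<in> (\<lambda>e. emb [:e:]) ` I" using T(3) t e by auto
  qed
  finally show ?thesis by (rule bracket_starI)
qed

lemma bracket_QMax_Spec: "I \<in> QMax (D1 R) (bracket_star R st) \<Longrightarrow> I \<in> Spec (D1 R)"
  by (rule QMax_prime[OF D1_subring subset_bracket_star bracket_star_colon])

text \<open>A proper quasi-\<open>[star]\<close>-ideal \<open>J\<close> contains no coefficient family of an element \<open>f\<close> of \<open>S_1\<close>:
  otherwise \<open>1 = \<Sum>_j (Y^j / f) f_j \<in> J^{[star]} \<inter> D_1 = J\<close>.\<close>

lemma quasi_bracket_avoids_S1:
  assumes J: "quasi_ideal (D1 R) (bracket_star R st) J" "J \<noteq> D1 R"
    and f: "f \<in> S1 R st" "f \<in> polys_over J"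
  shows False
proof -
  have idJ: "is_ideal (D1 R) J" and Jq: "bracket_star R st J \<inter> D1 R = J"
    using J unfolding quasi_ideal_def by auto
  have fnz: "emb f \<noteq> 0" using S1_nz[OF f(1)] by simp
  have "(\<Sum>j\<le>degree f. (emb (monom 1 j) / emb f) * emb [:coeff f j:])
        = (\<Sum>j\<le>degree f. emb (monom (coeff f j) j)) / emb f"
    unfolding sum_divide_distrib
    by (rule sum.cong[OF refl]) (simp add: emb_mult[symmetric] mult.commute smult_monom)
  also have "\<dots> = emb [:1:]" unfolding emb_sum[symmetric] poly_as_sum_of_monoms
    using fnz by (simp add: one_pCons[symmetric])
  finally have "emb [:1:] = (\<Sum>j\<le>degree f. (emb (monom 1 j) / emb f) * emb [:coeff f j:])" ..
  also have "\<dots> \<in> gen (D1Y_loc R st) ((\<lambda>e. emb [:e:]) ` J)"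
  proof (rule gen_sum[OF D1Y_loc_0 D1Y_loc_add], simp, rule ballI)
    fix j
    have "monom 1 j \<in> polys_over (D1 R)"
      using polys_over_monom subring_0[OF D1_subring] subring_1[OF D1_subring] by blast
    then show "emb (monom 1 j) / emb f \<in> D1Y_loc R st \<and> emb [:coeff f j:] \<in> (\<lambda>e. emb [:e:]) ` J"
      using D1Y_locI f polys_overD by blast
  qed
  finally have "1 \<in> J" using bracket_starI Jq subring_1[OF D1_subring] by blast
  then show False using ideal_one[OF idJ] J(2) by blast
qed

end

lemma poly_with_coefficients:
  fixes P :: "'a::zero set"
  assumes "finite P"
  obtains f :: "'a poly" where "\<And>A. 0 \<in> A \<Longrightarrow> f \<in> polys_over A \<longleftrightarrow> P \<subseteq> A"
proof -
  obtain xs where "set xs = P" using finite_list[OF assms] by blast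
  have "Poly xs \<in> polys_over A \<longleftrightarrow> range (coeff (Poly xs)) \<subseteq> A" for A
    unfolding polys_over_def by blast
  then have "\<And>A. 0 \<in> A \<Longrightarrow> Poly xs \<in> polys_over A \<longleftrightarrow> P \<subseteq> A"
    using \<open>set xs = P\<close> by simp
  then show ?thesis by (rule that)
qed

context semistar_subring
begin

text \<open>If \<open>c_D(J)^{star_f} = D^star\<close>, then \<open>1\<close> lies in the closure of a finitely generated
  ideal \<open>F\<close> contained in the ideal generated by the coefficients of finitely many elements
  of \<open>J\<close> (finite type of \<open>star_f\<close> and finite support of linear combinations).\<close>

lemma content_unit_witness:
  assumes c: "star_f R st (content_ideal R J) = st R"
  shows "\<exists>P0 F. finite P0 \<and> (\<forall>p\<in>P0. emb p \<in> J) \<and> fg_frac R F \<and> 1 \<in> st F \<and>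
           F \<subseteq> gen R (\<Union>p\<in>P0. range (coeff p))"
proof -
  have "1 \<in> star_f R st (content_ideal R J)" using c one_st_R by simp
  then obtain F where F: "fg_frac R F" "F \<subseteq> content_ideal R J" "1 \<in> st F" by (rule star_fE)
  obtain S0 where S0: "finite S0" "F = gen R S0" using F(1) unfolding fg_frac_def by auto
  define C where "C = {coeff p i | p i. emb p \<in> J}"
  have "S0 \<subseteq> gen R C" using F(2) S0(2) gen_base subring_1[OF sr]
    unfolding content_ideal_def C_def by blast
  from gen_finite_support[OF S0(1) this]
  obtain C' where C': "finite C'" "C' \<subseteq> C" "S0 \<subseteq> gen R C'" by blast
  have "\<forall>c\<in>C'. \<exists>p. emb p \<in> J \<and> c \<in> range (coeff p)" using C'(2) unfolding C_def by blast
  then obtain pick where pick: "\<forall>c\<in>C'. emb (pick c) \<in> J \<and> c \<in> range (coeff (pick c))"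
    by metis
  have "C' \<subseteq> (\<Union>p\<in>pick ` C'. range (coeff p))" using pick by blast
  then have "gen R S0 \<subseteq> gen R (\<Union>p\<in>pick ` C'. range (coeff p))"
    using gen_mono[OF C'(3)] gen_mono gen_gen[OF sr] by (metis subset_trans)
  then show ?thesis using F(1,3) S0(2) C'(1) pick by (intro exI[of _ "pick ` C'"] exI[of _ F]) auto
qed

text \<open>No prime of \<open>\<Delta>_1\<close> contains a nonzero constant \<open>d\<close> together with finitely many polynomials
  whose coefficients generate an ideal \<open>G\<close> with \<open>G^star = D^star\<close>: an upper to zero misses \<open>d\<close>,
  and for \<open>Q = P[X]\<close> all those coefficients would lie in \<open>P\<close>, giving \<open>P^{star_f} = D^star\<close>.\<close>

lemma Delta_avoids_unit_content:
  assumes Q: "Q \<in> Delta1 R st" and P1: "finite P1" "\<forall>p\<in>P1. emb p \<in> Q"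
    and d: "[:d:] \<in> P1" "d \<in> R" "d \<noteq> 0"
    and F: "fg_frac R F" "1 \<in> st F" "F \<subseteq> gen R (\<Union>p\<in>P1. range (coeff p))"
  shows False
proof -
  have QS: "Q \<in> Spec (D1 R)" and
    cases: "contr R Q = {0} \<or> (Q = extX (contr R Q) \<and> star_f R st (contr R Q) \<subset> st R)"
    using Q unfolding Delta1_def by auto
  from cases show False
  proof
    assume "contr R Q = {0}"
    moreover have "d \<in> contr R Q" using P1(2) d unfolding contr_def embK_def by simp
    ultimately show False using d(3) by simp
  next
    assume h: "Q = extX (contr R Q) \<and> star_f R st (contr R Q) \<subset> st R"
    let ?G = "gen R (\<Union>p\<in>P1. range (coeff p))"
    have "(\<Union>p\<in>P1. range (coeff p)) \<subseteq> contr R Q"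
      using P1(2) h emb_extX polys_overD by (metis (no_types, lifting) UN_subset_iff image_subsetI)
    then have GP: "?G \<subseteq> contr R Q" by (rule gen_subset_ideal[OF contr_ideal[OF Spec_ideal[OF QS]]])
    have "?G \<noteq> {0}" using F(1,3) gen_0 unfolding fg_frac_def by blast
    moreover have "finite (\<Union>p\<in>P1. range (coeff p))" using P1(1) by (simp add: range_coeff)
    ultimately have fgG: "fg_frac R ?G" unfolding fg_frac_def by blast
    have "1 \<in> st ?G" using st_mono[OF fg_frac_submod[OF F(1)] fg_frac_submod[OF fgG] F(3)] F(2) by blast
    then have "st R \<subseteq> star_f R st (contr R Q)"
      using one_in_st_imp[OF fg_frac_submod[OF fgG]] star_fI[OF fgG GP] by blast
    then show False using h by blast
  qed
qed

lemma S1_in_ideal: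
  assumes J: "is_ideal (D1 R) J" and d: "d \<in> R" "d \<noteq> 0" "embK d \<in> J"
    and c: "star_f R st (content_ideal R J) = st R"
  shows "\<exists>f. f \<in> S1 R st \<and> f \<in> polys_over J"
proof -
  obtain P0 F where P0: "finite P0" "\<forall>p\<in>P0. emb p \<in> J" "fg_frac R F" "1 \<in> st F"
    "F \<subseteq> gen R (\<Union>p\<in>P0. range (coeff p))"
    using content_unit_witness[OF c] by blast
  define P1 where "P1 = insert [:d:] P0"
  have P1: "finite P1" "\<forall>p\<in>P1. emb p \<in> J" "F \<subseteq> gen R (\<Union>p\<in>P1. range (coeff p))"
    using P0 d(3) gen_mono[of "\<Union>p\<in>P0. range (coeff p)" "\<Union>p\<in>P1. range (coeff p)"]
    unfolding P1_def embK_def by auto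
  obtain f where f: "\<And>A. 0 \<in> A \<Longrightarrow> f \<in> polys_over A \<longleftrightarrow> emb ` P1 \<subseteq> A"
    using poly_with_coefficients[of "emb ` P1"] P1(1) by blast
  have fJ: "f \<in> polys_over J" using f[OF ideal_0[OF J]] P1(2) by blast
  have "f \<in> S1 R st"
  proof (rule S1I)
    show "f \<in> polys_over (D1 R)" using fJ polys_over_mono[OF ideal_sub[OF J]] by blast
  next
    fix Q assume Q: "Q \<in> Delta1 R st"
    have "f \<in> polys_over Q \<Longrightarrow> \<forall>p\<in>P1. emb p \<in> Q"
      using f[OF ideal_0[OF Spec_ideal[OF Delta_Spec[OF Q]]]] by blast
    then show "f \<notin> polys_over Q"
      using Delta_avoids_unit_content[OF Q P1(1) _ _ d(1,2) P0(3,4) P1(3)] unfolding P1_def by blast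
  qed
  then show ?thesis using fJ by blast
qed

lemma quasi_bracket_content:
  assumes J: "quasi_ideal (D1 R) (bracket_star R st) J" "J \<noteq> D1 R" and c: "contr R J \<noteq> {0}"
  shows "star_f R st (content_ideal R J) \<noteq> st R"
proof
  assume s: "star_f R st (content_ideal R J) = st R"
  have idJ: "is_ideal (D1 R) J" using J unfolding quasi_ideal_def by blast
  obtain d where d: "d \<in> contr R J" "d \<noteq> 0" using c ideal_0[OF contr_ideal[OF idJ]] by blast
  then have "d \<in> R" "embK d \<in> J" unfolding contr_def by auto
  then obtain f where "f \<in> S1 R st" "f \<in> polys_over J" using S1_in_ideal[OF idJ _ d(2) _ s] by blast
  then show False using quasi_bracket_avoids_S1[OF J] by blast
qed

end

lemma common_denominator:
  fixes R :: "'f::field set"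
  assumes sr: "subring_of R" and qf: "is_quotient_field_of R"
  shows "\<exists>d\<in>R. d \<noteq> 0 \<and> smult d u \<in> polys_over R"
proof (induction u)
  case 0
  show ?case using subring_1[OF sr] polys_over_0[OF subring_0[OF sr]] by (intro bexI[of _ 1]) auto
next
  case (pCons a p)
  then obtain d' where d': "d' \<in> R" "d' \<noteq> 0" "smult d' p \<in> polys_over R" by blast
  obtain x y where xy: "x \<in> R" "y \<in> R" "y \<noteq> 0" "a = x / y"
    using qf unfolding is_quotient_field_of_def by blast
  have "smult (y * d') (pCons a p) = pCons (d' * x) (smult y (smult d' p))"
    using xy by (simp add: field_simps)
  moreover have "pCons (d' * x) (smult y (smult d' p)) \<in> polys_over R"
  proof (rule polys_overI)
    fix i show "coeff (pCons (d' * x) (smult y (smult d' p))) i \<in> R"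
      using subring_mult[OF sr] xy d' polys_overD[OF d'(3)]
      by (cases i) (auto simp: coeff_pCons mult.assoc)
  qed
  ultimately show ?case using subring_mult[OF sr xy(2) d'(1)] xy(3) d'(2)
    by (intro bexI[of _ "y * d'"]) (auto simp: mult_ac)
qed

lemma common_denominator2:
  fixes R :: "'f::field set"
  assumes sr: "subring_of R" and qf: "is_quotient_field_of R"
  shows "\<exists>d\<in>R. d \<noteq> 0 \<and> smult d u \<in> polys_over R \<and> smult d v \<in> polys_over R"
proof -
  obtain d1 d2 where d: "d1 \<in> R" "d1 \<noteq> 0" "smult d1 u \<in> polys_over R"
    "d2 \<in> R" "d2 \<noteq> 0" "smult d2 v \<in> polys_over R"
    using common_denominator[OF sr qf] by meson
  have "smult (d2 * d1) u \<in> polys_over R" "smult (d1 * d2) v \<in> polys_over R"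
    using polys_over_smult[OF sr d(4,3)] polys_over_smult[OF sr d(1,6)] by simp_all
  then show ?thesis using subring_mult[OF sr d(1,4)] d(2,5) by (metis mult.commute no_zero_divisors)
qed

text \<open>Over a field, two polynomials \<open>p \<noteq> 0\<close> and \<open>q\<close> have a common divisor \<open>h \<noteq> 0\<close> that is a
  \<open>K[X]\<close>-combination of them: take a nonzero combination of least degree.\<close>

lemma poly_common_divisor_combination:
  fixes p q :: "'a::field poly"
  assumes p: "p \<noteq> 0"
  obtains a b h where "a * p + b * q = h" "h \<noteq> 0" "h dvd p" "h dvd q"
proof -
  define M where "M = {x * p + y * q | x y. True}"
  have "p = 1 * p + 0 * q" "q = 0 * p + 1 * q" by simp_all
  then have pM: "p \<in> M" "q \<in> M" unfolding M_def by blast+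
  obtain h where h: "h \<in> M" "h \<noteq> 0" and hmin: "\<And>g. g \<in> M \<Longrightarrow> g \<noteq> 0 \<Longrightarrow> degree h \<le> degree g"
    using ex_has_least_nat[of "\<lambda>h. h \<in> M \<and> h \<noteq> 0" p degree] pM(1) p by blast
  obtain x y where xy: "h = x * p + y * q" using h(1) unfolding M_def by blast
  have "h dvd g" if gM: "g \<in> M" for g
  proof (rule ccontr)
    assume "\<not> h dvd g"
    then have nz: "g mod h \<noteq> 0" by (simp add: dvd_eq_mod_eq_0)
    obtain a b where ab: "g = a * p + b * q" using gM unfolding M_def by blast
    have "g mod h = g - (g div h) * h" using div_mult_mod_eq[of g h] by (metis add_diff_cancel_left')
    also have "\<dots> = (a - (g div h) * x) * p + (b - (g div h) * y) * q"
      unfolding ab xy by (simp add: algebra_simps)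
    finally have "g mod h \<in> M" unfolding M_def by blast
    then show False using degree_mod_less[OF h(2), of g] hmin nz by fastforce
  qed
  then show ?thesis using that xy h(2) pM by blast
qed

context field_subring
begin

lemma D1_ideal_mult: "is_ideal (D1 R) Q \<Longrightarrow> p \<in> polys_over R \<Longrightarrow> emb g \<in> Q \<Longrightarrow> emb (p * g) \<in> Q"
  using ideal_mult[of "D1 R" Q "emb p" "emb g"] by (simp add: emb_mult)

text \<open>An upper to zero \<open>Q\<close> (\<open>Q \<inter> D = 0\<close>) contains every \<open>g \<in> D[X]\<close> divisible in \<open>K[X]\<close> by an
  element \<open>q\<close> of \<open>Q\<close>: \<open>d g = (d u) q\<close> for a denominator \<open>d\<close> of \<open>u = g / q\<close>, and \<open>d \<notin> Q\<close>.\<close>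

lemma upper_zero_dvd_closed:
  assumes qf: "is_quotient_field_of R" and Q: "Q \<in> Spec (D1 R)" "contr R Q = {0}"
    and q: "emb q \<in> Q" and g: "g \<in> polys_over R" "q dvd g"
  shows "emb g \<in> Q"
proof -
  obtain u where u: "g = q * u" using g(2) by blast
  obtain d where d: "d \<in> R" "d \<noteq> 0" "smult d u \<in> polys_over R" using common_denominator[OF sr qf] by blast
  have "emb ([:d:] * g) = emb [:d:] * emb g" by (rule emb_mult)
  moreover have "[:d:] * g = smult d u * q" using u by (simp add: mult.commute)
  ultimately have "emb [:d:] * emb g \<in> Q" using D1_ideal_mult[OF Spec_ideal[OF Q(1)] d(3) q] by simp
  moreover have "emb [:d:] \<notin> Q" using Q(2) d unfolding contr_def embK_def by auto
  moreover have "emb [:d:] \<in> D1 R" "emb g \<in> D1 R"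
    using polys_over_const[OF subring_0[OF sr]] d(1) g(1) by simp_all
  ultimately show ?thesis using Spec_prime[OF Q(1)] by blast
qed

text \<open>A nonzero upper to zero \<open>Q\<close> of \<open>D[X]\<close> is generated, within \<open>D[X]\<close>, by divisibility by a
  nonzero element \<open>q\<close> of least degree: a nonzero remainder \<open>g mod q\<close> would, after clearing
  denominators, be an element of \<open>Q\<close> of smaller degree.\<close>

lemma upper_zero_generator:
  assumes qf: "is_quotient_field_of R" and Q: "Q \<in> Spec (D1 R)" "contr R Q = {0}" "Q \<noteq> {0}"
  obtains q where "q \<in> polys_over R" "q \<noteq> 0" "emb q \<in> Q"
    "\<And>g. g \<in> polys_over R \<Longrightarrow> emb g \<in> Q \<longleftrightarrow> q dvd g"
proof -
  have idQ: "is_ideal (D1 R) Q" using Spec_ideal[OF Q(1)] .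
  obtain x0 where x0: "x0 \<in> Q" "x0 \<noteq> 0" using Q(3) ideal_0[OF idQ] by blast
  then obtain q0 where "q0 \<in> polys_over R" "x0 = emb q0" using ideal_sub[OF idQ] by (auto elim: D1E)
  then have "q0 \<in> polys_over R \<and> q0 \<noteq> 0 \<and> emb q0 \<in> Q" using x0 by auto
  from ex_has_least_nat[of "\<lambda>q. q \<in> polys_over R \<and> q \<noteq> 0 \<and> emb q \<in> Q", OF this, of degree]
  obtain q where q: "q \<in> polys_over R" "q \<noteq> 0" "emb q \<in> Q"
    and qmin: "\<And>g. g \<in> polys_over R \<Longrightarrow> g \<noteq> 0 \<Longrightarrow> emb g \<in> Q \<Longrightarrow> degree q \<le> degree g" by blast
  have "q dvd g" if g: "g \<in> polys_over R" "emb g \<in> Q" for g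
  proof (rule ccontr)
    assume "\<not> q dvd g"
    then have nz: "g mod q \<noteq> 0" by (simp add: dvd_eq_mod_eq_0)
    obtain d where d: "d \<in> R" "d \<noteq> 0" "smult d (g div q) \<in> polys_over R"
      using common_denominator[OF sr qf] by blast
    have eq: "smult d (g mod q) = smult d g - smult d (g div q) * q"
      using div_mult_mod_eq[of g q] by (metis add_diff_cancel_left' smult_add_right mult_smult_left)
    have "smult d (g mod q) \<in> polys_over R"
      unfolding eq using polys_over_sr_diff[OF sr] polys_over_smult[OF sr d(1) g(1)]
        polys_over_sr_mult[OF sr d(3) q(1)] by blast
    moreover have "emb (smult d g) \<in> Q"
      using D1_ideal_mult[OF idQ _ g(2), of "[:d:]"] polys_over_const[OF subring_0[OF sr]] d(1) by simp
    then have "emb (smult d (g mod q)) \<in> Q"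
      unfolding eq emb_diff by (rule ideal_diff[OF D1_subring idQ _ D1_ideal_mult[OF idQ d(3) q(3)]])
    moreover have "degree (smult d (g mod q)) < degree q" using degree_mod_less[OF q(2), of g] nz d(2) by simp
    ultimately show False using qmin nz d(2) by fastforce
  qed
  then show ?thesis using that q upper_zero_dvd_closed[OF qf Q(1,2) q(3)] by blast
qed

lemma upper_zero_generator_prime:
  assumes qf: "is_quotient_field_of R" and Q: "Q \<in> Spec (D1 R)"
    and q: "q \<in> polys_over R" "q \<noteq> 0" "\<And>g. g \<in> polys_over R \<Longrightarrow> emb g \<in> Q \<longleftrightarrow> q dvd g"
  shows "prime_elem q"
proof (rule prime_elemI)
  show "q \<noteq> 0" by (fact q(2))
  have "1 \<in> polys_over R" by (rule polys_over_1[OF subring_0[OF sr] subring_1[OF sr]])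
  then show "\<not> q dvd 1" using q(3)[of 1] Spec_one[OF Q] by auto
next
  fix a b assume "q dvd a * b"
  obtain d where d: "d \<in> R" "d \<noteq> 0" "smult d a \<in> polys_over R" "smult d b \<in> polys_over R"
    using common_denominator2[OF sr qf] by blast
  have "q dvd smult d a * smult d b" using \<open>q dvd a * b\<close> by (simp add: dvd_smult)
  then have "emb (smult d a * smult d b) \<in> Q"
    using q(3) polys_over_sr_mult[OF sr d(3,4)] by blast
  then have "emb (smult d a) * emb (smult d b) \<in> Q" by (simp only: emb_mult)
  moreover have "emb (smult d a) \<in> D1 R" "emb (smult d b) \<in> D1 R" using d(3,4) by simp_all
  ultimately have "emb (smult d a) \<in> Q \<or> emb (smult d b) \<in> Q" using Spec_prime[OF Q] by blast
  then show "q dvd a \<or> q dvd b" using q(3) d by (auto simp: dvd_smult_iff)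
qed

text \<open>If a \<open>K[X]\<close>-combination \<open>a q + b j\<close> of two elements of an ideal \<open>J\<close> of \<open>D[X]\<close> is a unit
  \<open>c\<close>, clearing the denominators of \<open>a\<close> and \<open>b\<close> exhibits a nonzero constant \<open>d c\<close> in \<open>J\<close>.\<close>

lemma unit_combination_meets_D:
  assumes qf: "is_quotient_field_of R" and J: "is_ideal (D1 R) J"
    and q: "q \<in> polys_over R" and j: "j \<in> polys_over R" "emb q \<in> J" "emb j \<in> J"
    and h: "a * q + b * j = h" "is_unit h"
  shows "contr R J \<noteq> {0}"
proof -
  have "h \<noteq> 0" using h(2) by auto
  then obtain c where c: "h = [:c:]" "c \<noteq> 0" using is_unit_iff_degree h(2)
    by (metis degree_0_id pCons_0_0)
  obtain d where d: "d \<in> R" "d \<noteq> 0" "smult d a \<in> polys_over R" "smult d b \<in> polys_over R"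
    using common_denominator2[OF sr qf] by blast
  have eq: "smult d a * q + smult d b * j = [:d * c:]"
    using h(1) c(1) by (metis mult_smult_left smult_add_right smult_pCons smult_0_right)
  have "[:d * c:] \<in> polys_over R"
    unfolding eq[symmetric] using polys_over_sr_add[OF sr] polys_over_sr_mult[OF sr] d(3,4) q j(1) by blast
  then have dc: "d * c \<in> R" using polys_over_const[OF subring_0[OF sr]] by blast
  have "emb (smult d a * q + smult d b * j) \<in> J"
    unfolding emb_add using ideal_add[OF J D1_ideal_mult[OF J] D1_ideal_mult[OF J]] d(3,4) j(2,3) by blast
  then have "d * c \<in> contr R J" using dc unfolding contr_def embK_def eq by simp
  moreover have "d * c \<noteq> 0" using d(2) c(2) by simp
  ultimately show ?thesis by blast
qed

text \<open>With
  \<open>j \<in> J \<setminus> Q\<close>, a common divisor \<open>h = a q + b j\<close> of \<open>q\<close> and \<open>j\<close> must be a unit, since \<open>q\<close> is prime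
  and \<open>q \<nmid> j\<close>.\<close>

lemma ideal_above_upper_zero:
  assumes qf: "is_quotient_field_of R" and Q: "Q \<in> Spec (D1 R)" "contr R Q = {0}" "Q \<noteq> {0}"
    and J: "is_ideal (D1 R) J" "Q \<subseteq> J" "J \<noteq> Q"
  shows "contr R J \<noteq> {0}"
proof -
  obtain q where q: "q \<in> polys_over R" "q \<noteq> 0" "emb q \<in> Q"
    "\<And>g. g \<in> polys_over R \<Longrightarrow> emb g \<in> Q \<longleftrightarrow> q dvd g"
    using upper_zero_generator[OF qf Q] by blast
  have prime: "prime_elem q" using upper_zero_generator_prime[OF qf Q(1) q(1,2,4)] .
  obtain j where j: "j \<in> J" "j \<notin> Q" using J(2,3) by blast
  then obtain jp where jp: "jp \<in> polys_over R" "j = emb jp" using ideal_sub[OF J(1)] by (auto elim: D1E)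
  have njp: "\<not> q dvd jp" using q(4)[OF jp(1)] j jp by blast
  obtain a b h where h: "a * q + b * jp = h" "h \<noteq> 0" "h dvd q" "h dvd jp"
    using poly_common_divisor_combination[OF q(2)] by blast
  have "is_unit h"
  proof -
    obtain w where "q = h * w" using h(3) by blast
    then have "is_unit h \<or> is_unit w" using irreducibleD[OF prime_elem_imp_irreducible[OF prime]] by blast
    moreover have "\<not> is_unit w" using njp h(4) \<open>q = h * w\<close> by (metis dvd_mult_unit_iff dvd_trans dvd_refl)
    ultimately show ?thesis by blast
  qed
  then show ?thesis
    using unit_combination_meets_D[OF qf J(1) q(1) jp(1) _ _ h(1)] q(3) J(2) j jp by blast
qed

end

context semistar_subring
begin

text \<open>No nonzero finitely generated ideal lies in \<open>{0}\<close>, so \<open>{0}^{star_f}\<close> is empty.\<close>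

lemma star_f_zero: "E \<subseteq> {0} \<Longrightarrow> star_f R st E = {}"
  unfolding star_f_def fg_frac_def using gen_0 by blast

text \<open>It is nonzero (its content ideal is), lies in \<open>\<Delta>_1\<close>, and any proper
  quasi-\<open>[star]\<close>-ideal strictly above it would meet \<open>D \<setminus> 0\<close> and still have unit content.\<close>

lemma upper_zero_QMax:
  assumes qf: "is_quotient_field_of R" and Q: "Q \<in> Spec (D1 R)" "contr R Q = {0}"
    and c: "star_f R st (content_ideal R Q) = st R"
  shows "Q \<in> QMax (D1 R) (bracket_star R st)"
proof -
  have Q0: "Q \<noteq> {0}"
  proof
    assume "Q = {0}"
    then have "content_ideal R Q \<subseteq> {0}" unfolding content_ideal_def by (intro gen_least) auto
    then show False using c one_st_R star_f_zero by blast
  qed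
  have qQ: "quasi_ideal (D1 R) (bracket_star R st) Q"
    using Delta_quasi[OF _ Q0] Q unfolding Delta1_def by blast
  have "J = Q" if J: "quasi_ideal (D1 R) (bracket_star R st) J" "J \<noteq> D1 R" "Q \<subseteq> J" for J
  proof (rule ccontr)
    assume "J \<noteq> Q"
    have idJ: "is_ideal (D1 R) J" using J(1) unfolding quasi_ideal_def by blast
    have "contr R J \<noteq> {0}" using ideal_above_upper_zero[OF qf Q Q0 idJ J(3) \<open>J \<noteq> Q\<close>] .
    moreover have "star_f R st (content_ideal R J) = st R"
      using star_f_le[OF ideal_sub[OF content_ideal_ideal[OF idJ]]] c
        star_f_mono[OF content_mono[OF J(3)]] by blast
    ultimately show False using quasi_bracket_content[OF J(1,2)] by blast
  qed
  then show ?thesis unfolding QMax_def using qQ Spec_ne[OF Q(1)] by blast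
qed

text \<open>A proper quasi-\<open>[star]\<close>-ideal
  \<open>J \<supseteq> P[X]\<close> meets \<open>D \<setminus> 0\<close>, so \<open>c_D(J)^{star_f} \<noteq> D^star\<close>; the trace \<open>c_D(J)^{star_f} \<inter> D\<close> is a
  proper quasi-\<open>star_f\<close>-ideal containing \<open>P\<close>, hence equal to \<open>P\<close>, and \<open>J \<subseteq> c_D(J)[X] \<subseteq> P[X]\<close>.\<close>

lemma extX_quasi:
  assumes P: "P \<in> QMax R (star_f R st)"
  shows "quasi_ideal (D1 R) (bracket_star R st) (extX P)" "extX P \<noteq> D1 R"
proof -
  have qP: "quasi_ideal R (star_f R st) P" using P unfolding QMax_def by blast
  then obtain p where p: "p \<in> P" "p \<noteq> 0" using ideal_0 unfolding quasi_ideal_def by blast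
  have "emb [:p:] \<in> extX P"
    using polys_over_const[OF ideal_0, of R P p] qP p(1) unfolding quasi_ideal_def by simp
  then have "extX P \<noteq> {0}" using p(2) by force
  then show "quasi_ideal (D1 R) (bracket_star R st) (extX P)" using Delta_quasi[OF QMax_Delta[OF P]] by blast
  show "extX P \<noteq> D1 R" using Spec_ne[OF extX_Spec[OF QMax_star_f_Spec[OF P]]] .
qed

lemma extX_QMax:
  assumes P: "P \<in> QMax R (star_f R st)"
  shows "extX P \<in> QMax (D1 R) (bracket_star R st)"
proof -
  have qP: "quasi_ideal R (star_f R st) P" "P \<noteq> R"
    and maxP: "\<And>K. quasi_ideal R (star_f R st) K \<Longrightarrow> K \<noteq> R \<Longrightarrow> P \<subseteq> K \<Longrightarrow> K = P"
    using P unfolding QMax_def by auto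
  have idP: "is_ideal R P" "P \<noteq> {0}" using qP unfolding quasi_ideal_def by auto
  have "J = extX P" if J: "quasi_ideal (D1 R) (bracket_star R st) J" "J \<noteq> D1 R" "extX P \<subseteq> J" for J
  proof -
    have idJ: "is_ideal (D1 R) J" "J \<noteq> {0}" using J(1) unfolding quasi_ideal_def by auto
    have PcJ: "P \<subseteq> content_ideal R J" by (rule extX_sub_content[OF idP(1) J(3)])
    have "P = contr R (extX P)" using contr_extX[OF ideal_sub[OF idP(1)] ideal_0[OF idP(1)]] ..
    then have "P \<subseteq> contr R J" using J(3) unfolding contr_def by blast
    then have "contr R J \<noteq> {0}" using idP ideal_0 by blast
    then have ne: "star_f R st (content_ideal R J) \<noteq> st R" by (rule quasi_bracket_content[OF J(1,2)])
    note K = star_f_closure_quasi[OF content_ideal_ideal[OF idJ(1)] content_nz[OF idJ] ne]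
    have "star_f R st (content_ideal R J) \<inter> R = P" using maxP[OF K(1,2)] K(3) PcJ by blast
    then have "J \<subseteq> extX P" using content_sub_extX[OF idJ(1)] K(3) by blast
    then show ?thesis using J(3) by blast
  qed
  then show ?thesis unfolding QMax_def using extX_quasi[OF P] by blast
qed

text \<open>Conversely, a quasi-\<open>[star]\<close>-maximal ideal \<open>I\<close> is prime; unless it is of the first kind,
  \<open>c_D(I)^{star_f} \<noteq> D^star\<close>, so \<open>c_D(I)\<close> lies in some quasi-\<open>star_f\<close>-maximal \<open>P\<close>, and then
  \<open>I \<subseteq> P[X]\<close> forces \<open>I = P[X]\<close>.\<close>

lemma QMax_bracket_cases:
  assumes I: "I \<in> QMax (D1 R) (bracket_star R st)"
  shows "(I \<in> Spec (D1 R) \<and> contr R I = {0} \<and> star_f R st (content_ideal R I) = st R) \<or>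
         (\<exists>P \<in> QMax R (star_f R st). I = extX P)"
proof (cases "contr R I = {0} \<and> star_f R st (content_ideal R I) = st R")
  case True
  then show ?thesis using bracket_QMax_Spec[OF I] by blast
next
  case False
  have qI: "quasi_ideal (D1 R) (bracket_star R st) I" "I \<noteq> D1 R"
    and maxI: "\<And>J. quasi_ideal (D1 R) (bracket_star R st) J \<Longrightarrow> J \<noteq> D1 R \<Longrightarrow> I \<subseteq> J \<Longrightarrow> J = I"
    using I unfolding QMax_def by auto
  have idI: "is_ideal (D1 R) I" "I \<noteq> {0}" using qI unfolding quasi_ideal_def by auto
  have ne: "star_f R st (content_ideal R I) \<noteq> st R"
    using False quasi_bracket_content[OF qI] by blast
  note K = star_f_closure_quasi[OF content_ideal_ideal[OF idI(1)] content_nz[OF idI] ne]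
  obtain P where P: "P \<in> QMax R (star_f R st)" "star_f R st (content_ideal R I) \<inter> R \<subseteq> P"
    using QMax_exists[OF K(1,2)] by blast
  have "I \<subseteq> extX P" using content_sub_extX[OF idI(1)] K(3) P(2) by blast
  then have "extX P = I" using maxI[OF extX_quasi[OF P(1)]] by blast
  then show ?thesis using P(1) by blast
qed

end

theorem theorem2p3:
  fixes D :: "'k::field set" and st :: "'k set \<Rightarrow> 'k set"
  assumes "subring_of D" and "is_quotient_field_of D" and "semistar D st"
  shows "QMax (D1 D) (bracket_star D st) =
           {Q \<in> Spec (D1 D). contr D Q = {0} \<and> star_f D st (content_ideal D Q) = st D}
           \<union> {extX P | P. P \<in> QMax D (star_f D st)}"
proof -
  interpret semistar_subring D st using assms(1,3) by unfold_locales
  show ?thesis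
  proof (intro equalityI subsetI)
    fix I assume "I \<in> QMax (D1 D) (bracket_star D st)"
    then show "I \<in> {Q \<in> Spec (D1 D). contr D Q = {0} \<and> star_f D st (content_ideal D Q) = st D}
                  \<union> {extX P | P. P \<in> QMax D (star_f D st)}"
      using QMax_bracket_cases by blast
  next
    fix I assume "I \<in> {Q \<in> Spec (D1 D). contr D Q = {0} \<and> star_f D st (content_ideal D Q) = st D}
                  \<union> {extX P | P. P \<in> QMax D (star_f D st)}"
    then show "I \<in> QMax (D1 D) (bracket_star D st)"
      using upper_zero_QMax[OF assms(2)] extX_QMax by blast
  qed
qed

end
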